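(* If $S\in{\mathcal S}_d({\mathcal U},{\mathcal Y})$ is inner, then every observable weakly coisometric realization of $S$ is commutative.
   Context: Let ${\mathbb B}^d=\{\lambda\in{\mathbb C}^d:\langle\lambda,\lambda\rangle<1\}$. ${\mathcal H}_{\mathcal Y}(k_d)$ is the reproducing kernel Hilbert space of ${\mathcal Y}$-valued functions on ${\mathbb B}^d$ with kernel $k_d(\lambda,\zeta)I_{\mathcal Y}$, $k_d(\lambda,\zeta)=1/(1-\langle\lambda,\zeta\rangle)$. ${\mathcal S}_d({\mathcal U},{\mathcal Y})$ is the set of ${\mathcal L}({\mathcal U},{\mathcal Y})$-valued holomorphic $S$ on ${\mathbb B}^d$ such that $M_S:f\mapsto Sf$ is a contraction from ${\mathcal H}_{\mathcal U}(k_d)$ into ${\mathcal H}_{\mathcal Y}(k_d)$; $S$ is inner if $M_S$ is a partial isometry. A realization: Hilbert space ${\mathcal X}$, $A_j\in{\mathcal L}({\mathcal X})$, $B_j\in{\mathcal L}({\mathcal U},{\mathcal X})$, $C\in{\mathcal L}({\mathcal X},{\mathcal Y})$, $D\in{\mathcal L}({\mathcal U},{\mathcal Y})$, $A=\mathrm{col}(A_j)$, $B=\mathrm{col}(B_j)$, $Z(\lambda)=[\lambda_1I\ \cdots\ \lambda_dI]$, with $S(\lambda)=D+C(I-Z(\lambda)A)^{-1}Z(\lambda)B$; ${\mathbf U}=\begin{bmatrix}A&B\\C&D\end{bmatrix}$. Observable: $C(I-Z(\lambda)A)^{-1}x\equiv0$ implies $x=0$. Weakly coisometric: ${\mathbf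 U}$ contractive and ${\mathbf U}^*$ isometric on ${\mathcal D}\oplus{\mathcal Y}$, ${\mathcal D}=\overline{\mathrm{span}}\{Z(\zeta)^*(I-A^*Z(\zeta)^* )^{-1}C^*y:\zeta\in{\mathbb B}^d,y\in{\mathcal Y}\}$. Commutative: $A_iA_j=A_jA_i$ for all $i,j$. *)

theory Defs
  imports "HOL-Analysis.Analysis"
begin

class chilbert = real_normed_vector + complete_space +
  fixes scaleC :: "complex \<Rightarrow> 'a \<Rightarrow> 'a"
    and cinner :: "'a \<Rightarrow> 'a \<Rightarrow> complex"
  assumes scaleC_add_right: "scaleC c (x + y) = scaleC c x + scaleC c y"
    and scaleC_add_left: "scaleC (c + d) x = scaleC c x + scaleC d x"
    and scaleC_scaleC: "scaleC c (scaleC d x) = scaleC (c * d) x"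
    and scaleC_one: "scaleC 1 x = x"
    and scaleR_scaleC: "scaleR r x = scaleC (complex_of_real r) x"
    and cinner_add_left: "cinner (x + y) z = cinner x z + cinner y z"
    and cinner_scaleC_left: "cinner (scaleC c x) y = c * cinner x y"
    and cinner_commute: "cinner y x = cnj (cinner x y)"
    and cinner_self_norm: "cinner x x = complex_of_real ((norm x)^2)"

instantiation complex :: chilbert
begin
definition scaleC_complex :: "complex \<Rightarrow> complex \<Rightarrow> complex" where
  "scaleC_complex c x = c * x"
definition cinner_complex :: "complex \<Rightarrow> complex \<Rightarrow> complex" where
  "cinner_complex x y = x * cnj y"
instance
proof
  fix c d x y z :: complex and r :: real
  show "scaleC c (x + y) = scaleC c x + scaleC c y" by (simp add: scaleC_complex_def algebra_simps)
  show "scaleC (c + d) x = scaleC c x + scaleC d x" by (simp add: scaleC_complex_def algebra_simps)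
  show "scaleC c (scaleC d x) = scaleC (c * d) x" by (simp add: scaleC_complex_def)
  show "scaleC 1 x = x" by (simp add: scaleC_complex_def)
  show "scaleR r x = scaleC (complex_of_real r) x" by (simp add: scaleC_complex_def scaleR_conv_of_real)
  show "cinner (x + y) z = cinner x z + cinner y z" by (simp add: cinner_complex_def algebra_simps)
  show "cinner (scaleC c x) y = c * cinner x y" by (simp add: cinner_complex_def scaleC_complex_def)
  show "cinner y x = cnj (cinner x y)" by (simp add: cinner_complex_def)
  show "cinner x x = complex_of_real ((norm x)^2)" unfolding cinner_complex_def by (rule complex_norm_square[symmetric])
qed
end

definition blin :: "('a::chilbert \<Rightarrow> 'b::chilbert) \<Rightarrow> bool" where
  "blin T \<longleftrightarrow> (\<forall>x y. T (x + y) = T x + T y) \<and> (\<forall>c x. T (scaleC c x) = scaleC c (T x))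
     \<and> (\<exists>K. \<forall>x. norm (T x) \<le> K * norm x)"

definition adj :: "('a::chilbert \<Rightarrow> 'b::chilbert) \<Rightarrow> 'b \<Rightarrow> 'a" where
  "adj T y = (THE x. \<forall>v. cinner (T v) y = cinner v x)"

definition ip :: "complex^'d \<Rightarrow> complex^'d \<Rightarrow> complex" where
  "ip l z = (\<Sum>j\<in>UNIV. l$j * cnj (z$j))"

definition dball :: "(complex^'d) set" where
  "dball = {l. Re (ip l l) < 1}"

definition kd :: "complex^'d \<Rightarrow> complex^'d \<Rightarrow> complex" where
  "kd l z = 1 / (1 - ip l z)"

text \<open>f belongs to H_Y(k_d) with norm^2 at most C iff the functional
  sum_j k_{l_j} y_j |-> sum_j <f(l_j), y_j> on the span of kernel functions is bounded by sqrt C.\<close>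
definition rk_bound :: "(complex^'d \<Rightarrow> 'y::chilbert) \<Rightarrow> real \<Rightarrow> bool" where
  "rk_bound f C \<longleftrightarrow> (\<forall>n (p::nat \<Rightarrow> complex^'d) (y::nat \<Rightarrow> 'y). (\<forall>i<n. p i \<in> dball) \<longrightarrow>
      (cmod (\<Sum>i<n. cinner (f (p i)) (y i)))^2
        \<le> C * Re (\<Sum>i<n. \<Sum>j<n. kd (p i) (p j) * cinner (y j) (y i)))"

definition rk_mem :: "(complex^'d \<Rightarrow> 'y::chilbert) \<Rightarrow> bool" where
  "rk_mem f \<longleftrightarrow> (\<exists>C. rk_bound f C)"

definition rk_normsq :: "(complex^'d \<Rightarrow> 'y::chilbert) \<Rightarrow> real" where
  "rk_normsq f = Inf {C. 0 \<le> C \<and> rk_bound f C}"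

text \<open>Inner product of H_Y(k_d) by polarization.\<close>
definition rk_inner :: "(complex^'d \<Rightarrow> 'y::chilbert) \<Rightarrow> (complex^'d \<Rightarrow> 'y) \<Rightarrow> complex" where
  "rk_inner f g = (1/4) * (\<Sum>k<(4::nat). \<i>^k *
      complex_of_real (rk_normsq (\<lambda>m. f m + scaleC (\<i>^k) (g m))))"

text \<open>Weak holomorphy on the ball (equivalent to holomorphy for operator-valued functions).\<close>
definition weakly_holo :: "(complex^'d \<Rightarrow> 'u::chilbert \<Rightarrow> 'y::chilbert) \<Rightarrow> bool" where
  "weakly_holo S \<longleftrightarrow> (\<forall>u y. \<forall>l\<in>dball. \<exists>g'.
      ((\<lambda>m. cinner (S m u) y) has_derivative g') (at l) \<and> (\<forall>v. g' (\<i> *s v) = \<i> * g' v))"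

definition schur_class :: "(complex^'d \<Rightarrow> 'u::chilbert \<Rightarrow> 'y::chilbert) \<Rightarrow> bool" where
  "schur_class S \<longleftrightarrow> (\<forall>l\<in>dball. blin (S l)) \<and> weakly_holo S \<and>
     (\<forall>f::complex^'d \<Rightarrow> 'u. rk_mem f \<longrightarrow>
        rk_mem (\<lambda>m. S m (f m)) \<and> rk_normsq (\<lambda>m. S m (f m)) \<le> rk_normsq f)"

text \<open>Inner: M_S is a partial isometry, i.e. isometric on the orthogonal complement of its kernel.\<close>
definition inner_schur :: "(complex^'d \<Rightarrow> 'u::chilbert \<Rightarrow> 'y::chilbert) \<Rightarrow> bool" where
  "inner_schur S \<longleftrightarrow> schur_class S \<and>
     (\<forall>f::complex^'d \<Rightarrow> 'u. rk_mem f \<and>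
        (\<forall>g. rk_mem g \<and> (\<forall>m\<in>dball. S m (g m) = 0) \<longrightarrow> rk_inner f g = 0)
        \<longrightarrow> rk_normsq (\<lambda>m. S m (f m)) = rk_normsq f)"

definition ZA :: "('d::finite \<Rightarrow> 'x::chilbert \<Rightarrow> 'x) \<Rightarrow> complex^'d \<Rightarrow> 'x \<Rightarrow> 'x" where
  "ZA A l x = (\<Sum>j\<in>UNIV. scaleC (l$j) (A j x))"

definition ZB :: "('d::finite \<Rightarrow> 'u::chilbert \<Rightarrow> 'x::chilbert) \<Rightarrow> complex^'d \<Rightarrow> 'u \<Rightarrow> 'x" where
  "ZB B l u = (\<Sum>j\<in>UNIV. scaleC (l$j) (B j u))"

definition resolv :: "('d::finite \<Rightarrow> 'x::chilbert \<Rightarrow> 'x) \<Rightarrow> complex^'d \<Rightarrow> 'x \<Rightarrow> 'x" where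
  "resolv A l x = (THE w. w - ZA A l w = x)"

definition realization :: "(complex^'d \<Rightarrow> 'u::chilbert \<Rightarrow> 'y::chilbert) \<Rightarrow>
    ('d::finite \<Rightarrow> 'x::chilbert \<Rightarrow> 'x) \<Rightarrow> ('d \<Rightarrow> 'u \<Rightarrow> 'x) \<Rightarrow> ('x \<Rightarrow> 'y) \<Rightarrow> ('u \<Rightarrow> 'y) \<Rightarrow> bool" where
  "realization S A B C D \<longleftrightarrow> (\<forall>j. blin (A j) \<and> blin (B j)) \<and> blin C \<and> blin D \<and>
     (\<forall>l\<in>dball. bij (\<lambda>w. w - ZA A l w)) \<and>
     (\<forall>l\<in>dball. \<forall>u. S l u = D u + C (resolv A l (ZB B l u)))"

definition observable :: "('d::finite \<Rightarrow> 'x::chilbert \<Rightarrow> 'x) \<Rightarrow> ('x \<Rightarrow> 'y::chilbert) \<Rightarrow> bool" where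
  "observable A C \<longleftrightarrow> (\<forall>x. (\<forall>l\<in>dball. C (resolv A l x) = 0) \<longrightarrow> x = 0)"

text \<open>The colligation U = [A B; C D] : X (+) U -> X^d (+) Y is contractive.\<close>
definition colig_contractive :: "('d::finite \<Rightarrow> 'x::chilbert \<Rightarrow> 'x) \<Rightarrow> ('d \<Rightarrow> 'u::chilbert \<Rightarrow> 'x)
    \<Rightarrow> ('x \<Rightarrow> 'y::chilbert) \<Rightarrow> ('u \<Rightarrow> 'y) \<Rightarrow> bool" where
  "colig_contractive A B C D \<longleftrightarrow> (\<forall>x u.
     (\<Sum>j\<in>UNIV. (norm (A j x + B j u))^2) + (norm (C x + D u))^2 \<le> (norm x)^2 + (norm u)^2)"

definition ZAstar :: "('d::finite \<Rightarrow> 'x::chilbert \<Rightarrow> 'x) \<Rightarrow> complex^'d \<Rightarrow> 'x \<Rightarrow> 'x" where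
  "ZAstar A z x = (\<Sum>j\<in>UNIV. adj (A j) (scaleC (cnj (z$j)) x))"

definition dgen :: "('d::finite \<Rightarrow> 'x::chilbert \<Rightarrow> 'x) \<Rightarrow> ('x \<Rightarrow> 'y::chilbert) \<Rightarrow> complex^'d \<Rightarrow> 'y \<Rightarrow> 'd \<Rightarrow> 'x" where
  "dgen A C z y = (let w = (THE w. w - ZAstar A z w = adj C y) in (\<lambda>j. scaleC (cnj (z$j)) w))"

definition dspan :: "('d::finite \<Rightarrow> 'x::chilbert \<Rightarrow> 'x) \<Rightarrow> ('x \<Rightarrow> 'y::chilbert) \<Rightarrow> ('d \<Rightarrow> 'x) set" where
  "dspan A C = {h. \<exists>n (c::nat \<Rightarrow> complex) z y. (\<forall>i<n. z i \<in> dball) \<and>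
      h = (\<lambda>j. \<Sum>i<n. scaleC (c i) (dgen A C (z i) (y i) j))}"

definition dspace :: "('d::finite \<Rightarrow> 'x::chilbert \<Rightarrow> 'x) \<Rightarrow> ('x \<Rightarrow> 'y::chilbert) \<Rightarrow> ('d \<Rightarrow> 'x) set" where
  "dspace A C = {h. \<forall>e>0. \<exists>h'\<in>dspan A C. (\<Sum>j\<in>UNIV. (norm (h j - h' j))^2) < e}"

definition weakly_coisometric :: "('d::finite \<Rightarrow> 'x::chilbert \<Rightarrow> 'x) \<Rightarrow> ('d \<Rightarrow> 'u::chilbert \<Rightarrow> 'x)
    \<Rightarrow> ('x \<Rightarrow> 'y::chilbert) \<Rightarrow> ('u \<Rightarrow> 'y) \<Rightarrow> bool" where
  "weakly_coisometric A B C D \<longleftrightarrow> colig_contractive A B C D \<and>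
     (\<forall>h y. h \<in> dspace A C \<longrightarrow>
        (norm ((\<Sum>j\<in>UNIV. adj (A j) (h j)) + adj C y))^2
          + (norm ((\<Sum>j\<in>UNIV. adj (B j) (h j)) + adj D y))^2
        = (\<Sum>j\<in>UNIV. (norm (h j))^2) + (norm y)^2)"

definition commutative :: "('d \<Rightarrow> 'x \<Rightarrow> 'x) \<Rightarrow> bool" where
  "commutative A \<longleftrightarrow> (\<forall>i j. A i \<circ> A j = A j \<circ> A i)"

end

theory Submission
  imports Defs
begin

text \<open>Let O x = C (I - Z(.) A)^-1 x be the observability operator of the realization.
  Weak coisometry gives O O^* = I - M_S M_S^* on kernel functions; when S is inner,
  M_S M_S^* is a projection, and then O is isometric on the range of O^*. For x in that range,
  expanding O x twice as C x + \<Sum>j l_j (C A_j x + \<Sum>k l_k O ((A_k A_j x + A_j A_k x) / 2))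
  bounds the norm of O x, and comparing with the contractivity of the colligation at x and at the
  A_j x shows that A_k A_j x = A_j A_k x. By observability the range of O^* is dense, and taking
  adjoints carries the commutation over to all of X.\<close>

section \<open>Complex Hilbert spaces\<close>

lemma (in additive) sum_list_map: "f (\<Sum>x\<leftarrow>xs. g x) = (\<Sum>x\<leftarrow>xs. f (g x))"
  by (induction xs) (simp_all add: zero add)

interpretation scaleC_left: additive "\<lambda>c. scaleC c x :: 'a::chilbert"
  by standard (rule scaleC_add_left)

interpretation scaleC_right: additive "\<lambda>x. scaleC c x :: 'a::chilbert"
  by standard (rule scaleC_add_right)

lemma cinner_add_right: "cinner x (y + z) = cinner x y + cinner x z"
  by (metis cinner_add_left cinner_commute complex_cnj_add)

interpretation cinner_left: additive "\<lambda>x. cinner x y" for y :: "'a::chilbert"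
  by standard (rule cinner_add_left)

interpretation cinner_right: additive "\<lambda>y. cinner x y" for x :: "'a::chilbert"
  by standard (rule cinner_add_right)

lemma scaleC_minus1_left: "scaleC (- 1) x = - x"
  by (simp add: scaleC_left.minus scaleC_one)

lemma scaleC_left_commute: "scaleC a (scaleC b x) = scaleC b (scaleC a x)"
  by (simp add: scaleC_scaleC mult.commute)

lemma cinner_scaleC_right: "cinner x (scaleC c y) = cnj c * cinner x y"
  by (metis cinner_commute cinner_scaleC_left complex_cnj_mult)

lemma Re_cinner_self: "Re (cinner x x) = (norm x)^2"
  by (simp add: cinner_self_norm)

lemma cinner_self_eq_0: "cinner x x = 0 \<longleftrightarrow> x = 0"
  by (simp add: cinner_self_norm)

lemma power2_norm_add: "(norm (x + y))^2 = (norm x)^2 + (norm y)^2 + 2 * Re (cinner x y)"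
proof -
  have "complex_of_real ((norm (x + y))^2) = cinner (x + y) (x + y)"
    by (simp only: cinner_self_norm)
  also have "\<dots> = cinner x x + cinner y y + (cinner x y + cnj (cinner x y))"
    by (simp add: cinner_left.add cinner_right.add cinner_commute[of y x] algebra_simps)
  finally have "(norm (x + y))^2 = Re (cinner x x + cinner y y + (cinner x y + cnj (cinner x y)))"
    by (metis Re_complex_of_real)
  then show ?thesis
    by (simp add: Re_cinner_self)
qed

lemma power2_norm_diff: "(norm (x - y))^2 = (norm x)^2 + (norm y)^2 - 2 * Re (cinner x y)"
  using power2_norm_add[of x "- y"] by (simp add: cinner_right.minus)

lemma norm_scaleC: "norm (scaleC c x) = cmod c * norm x"
proof -
  have "cinner (scaleC c x) (scaleC c x) = c * cnj c * cinner x x"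
    by (simp add: cinner_scaleC_left cinner_scaleC_right)
  then have "Re (cinner (scaleC c x) (scaleC c x)) = (cmod c)^2 * Re (cinner x x)"
    by (simp add: complex_norm_square[symmetric] cinner_self_norm del: of_real_power)
  then have "(norm (scaleC c x))^2 = (cmod c * norm x)^2"
    by (simp add: Re_cinner_self power_mult_distrib)
  then show ?thesis
    by simp
qed

lemma power2_norm_diff_projection:
  assumes "y \<noteq> 0"
  shows "(norm (x - scaleC (cinner x y / complex_of_real ((norm y)^2)) y))^2
    = (norm x)^2 - (cmod (cinner x y))^2 / (norm y)^2"
proof -
  define t where "t = cinner x y / complex_of_real ((norm y)^2)"
  have ny: "norm y > 0"
    using assms by simp
  have "(norm (x - scaleC t y))^2 = (norm x)^2 + (cmod t * norm y)^2 - 2 * Re (cnj t * cinner x y)"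
    by (simp add: power2_norm_diff norm_scaleC cinner_scaleC_right)
  also have "cnj t * cinner x y = complex_of_real ((cmod (cinner x y))^2 / (norm y)^2)"
    using complex_norm_square[of "cinner x y"] by (simp add: t_def mult.commute del: of_real_power)
  also have "(cmod t * norm y)^2 = (cmod (cinner x y))^2 / (norm y)^2"
  proof -
    have "cmod t = cmod (cinner x y) / (norm y)^2"
      unfolding t_def norm_divide by (metis norm_of_real abs_of_nonneg zero_le_power2)
    with ny show ?thesis
      by (simp add: power_divide power2_eq_square)
  qed
  finally show ?thesis
    unfolding t_def[symmetric] Re_complex_of_real by linarith
qed

lemma norm_cinner_le: "cmod (cinner x y) \<le> norm x * norm y"
proof (cases "y = 0")
  case False
  have "0 \<le> (norm x)^2 - (cmod (cinner x y))^2 / (norm y)^2"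
    using power2_norm_diff_projection[OF False, of x] by (metis zero_le_power2)
  with False have "(cmod (cinner x y))^2 \<le> (norm x * norm y)^2"
    by (simp add: field_simps)
  then show ?thesis
    by (rule power2_le_imp_le) simp
qed (simp add: cinner_right.zero)

lemma cinner_eq_0_if_nearest:
  assumes "\<And>t. norm z \<le> norm (z - scaleC t m)"
  shows "cinner z m = 0"
proof (cases "m = 0")
  case False
  have "(norm z)^2 \<le> (norm z)^2 - (cmod (cinner z m))^2 / (norm m)^2"
    unfolding power2_norm_diff_projection[OF False, symmetric] using assms norm_ge_zero by (rule power_mono)
  with False show ?thesis
    by (simp add: divide_le_0_iff)
qed (simp add: cinner_right.zero)

lemma sum_lessThan_4: "(\<Sum>k<(4::nat). f k) = f 0 + f 1 + f 2 + f 3"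
  by (simp add: numeral_eq_Suc)

lemma cinner_polarization:
  "cinner x y = (1/4) * (\<Sum>k<(4::nat). \<i>^k * complex_of_real ((norm (x + scaleC (\<i>^k) y))^2))"
proof -
  have expand: "complex_of_real ((norm (x + scaleC c y))^2)
      = cinner x x + cnj c * cinner x y + c * cinner y x + c * cnj c * cinner y y" for c
  proof -
    have "complex_of_real ((norm (x + scaleC c y))^2) = cinner (x + scaleC c y) (x + scaleC c y)"
      by (simp only: cinner_self_norm)
    then show ?thesis
      by (simp add: cinner_left.add cinner_right.add cinner_scaleC_left cinner_scaleC_right algebra_simps)
  qed
  show ?thesis
    unfolding sum_lessThan_4 expand by (simp add: power2_eq_square power3_eq_cube algebra_simps complex_eq_iff)
qed

lemma Cauchy_Schwarz_sqrt_sum: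
  fixes a b :: "'j \<Rightarrow> real"
  assumes "\<And>j. 0 \<le> a j" and "\<And>j. 0 \<le> b j"
  shows "(\<Sum>j\<in>J. sqrt (a j) * sqrt (b j)) \<le> sqrt (\<Sum>j\<in>J. a j) * sqrt (\<Sum>j\<in>J. b j)"
proof -
  have "(\<Sum>j\<in>J. sqrt (a j) * sqrt (b j))^2 \<le> (\<Sum>j\<in>J. (sqrt (a j))^2) * (\<Sum>j\<in>J. (sqrt (b j))^2)"
    by (rule Cauchy_Schwarz_ineq_sum)
  also have "\<dots> = (\<Sum>j\<in>J. a j) * (\<Sum>j\<in>J. b j)"
    using assms by simp
  finally have "(\<Sum>j\<in>J. sqrt (a j) * sqrt (b j)) \<le> sqrt ((\<Sum>j\<in>J. a j) * (\<Sum>j\<in>J. b j))"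
    by (rule real_le_rsqrt)
  then show ?thesis
    by (simp add: real_sqrt_mult)
qed

lemma parallelogram_law:
  fixes p q :: "'a::chilbert"
  shows "(norm (p + q))^2 + (norm (p - q))^2 = 2 * (norm p)^2 + 2 * (norm q)^2"
  using power2_norm_add[of p q] power2_norm_diff[of p q] by linarith

lemma parallelogram_midpoint:
  fixes a b v :: "'a::chilbert"
  shows "(norm (a - b))^2 = 2 * (norm (v - a))^2 + 2 * (norm (v - b))^2 - 4 * (norm (v - scaleR (1/2) (a + b)))^2"
proof -
  have "v - scaleR (1/2) (a + b) = scaleR (1/2) ((v - a) + (v - b))"
    by (simp add: algebra_simps flip: scaleR_add_left)
  then have mid: "4 * (norm (v - scaleR (1/2) (a + b)))^2 = (norm ((v - a) + (v - b)))^2"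
    by (simp add: power2_eq_square)
  have "(norm (a - b))^2 = (norm ((v - a) - (v - b)))^2"
    using norm_minus_commute[of a b] by simp
  then show ?thesis
    using mid parallelogram_law[of "v - a" "v - b"] by linarith
qed

lemma sum_power2_norm_symmetrize:
  fixes a :: "'j \<Rightarrow> 'j \<Rightarrow> 'a::chilbert"
  shows "(\<Sum>j\<in>J. \<Sum>k\<in>J. (norm (scaleC (1/2) (a j k + a k j)))^2)
      + (\<Sum>j\<in>J. \<Sum>k\<in>J. (norm (scaleC (1/2) (a j k - a k j)))^2)
    = (\<Sum>j\<in>J. \<Sum>k\<in>J. (norm (a j k))^2)"
proof -
  have half: "(norm (scaleC (1/2) v))^2 = (norm v)^2 / 4" for v :: 'a
    by (simp add: norm_scaleC power_mult_distrib power2_eq_square)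
  have "(norm (scaleC (1/2) (a j k + a k j)))^2 + (norm (scaleC (1/2) (a j k - a k j)))^2
      = (norm (a j k))^2 / 2 + (norm (a k j))^2 / 2" for j k
    unfolding half using parallelogram_law[of "a j k" "a k j"] by simp
  then have "(\<Sum>j\<in>J. \<Sum>k\<in>J. (norm (scaleC (1/2) (a j k + a k j)))^2)
      + (\<Sum>j\<in>J. \<Sum>k\<in>J. (norm (scaleC (1/2) (a j k - a k j)))^2)
    = (\<Sum>j\<in>J. \<Sum>k\<in>J. (norm (a j k))^2 / 2) + (\<Sum>j\<in>J. \<Sum>k\<in>J. (norm (a k j))^2 / 2)"
    by (simp add: sum.distrib[symmetric])
  also have "(\<Sum>j\<in>J. \<Sum>k\<in>J. (norm (a k j))^2 / 2) = (\<Sum>j\<in>J. \<Sum>k\<in>J. (norm (a j k))^2 / 2)"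
    by (rule sum.swap)
  finally show ?thesis
    by (simp add: sum.distrib[symmetric])
qed

lemma le_if_perturbed_le:
  fixes b N :: real
  assumes "\<And>\<delta>. 0 < \<delta> \<Longrightarrow> \<delta> < 1 \<Longrightarrow> b * (1 - \<delta>)^2 \<le> N * ((1 + \<delta>)^2 + \<delta>^2)"
  shows "b \<le> N"
proof -
  have "((\<lambda>\<delta>. N * ((1 + \<delta>)^2 + \<delta>^2)) \<longlongrightarrow> N * ((1 + 0)^2 + 0^2)) (at_right 0)"
    by (intro tendsto_intros)
  moreover have "((\<lambda>\<delta>. b * (1 - \<delta>)^2) \<longlongrightarrow> b * (1 - 0)^2) (at_right 0)"
    by (intro tendsto_intros)
  moreover have "eventually (\<lambda>\<delta>. \<delta> \<in> {0<..<1}) (at_right (0::real))"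
    by (rule eventually_at_right_real) simp
  then have "eventually (\<lambda>\<delta>. b * (1 - \<delta>)^2 \<le> N * ((1 + \<delta>)^2 + \<delta>^2)) (at_right (0::real))"
    by eventually_elim (use assms in auto)
  ultimately have "b * (1 - 0)^2 \<le> N * ((1 + 0)^2 + 0^2)"
    by (rule tendsto_le[OF trivial_limit_at_right_real])
  then show ?thesis
    by simp
qed

lemma Cauchy_if_power2_dist_le:
  fixes f :: "nat \<Rightarrow> 'a::metric_space"
  assumes "e \<longlonglongrightarrow> 0" and dist_le: "\<And>n k. (dist (f n) (f k))^2 \<le> e n + e k"
  shows "Cauchy f"
proof (rule metric_CauchyI)
  fix \<epsilon> :: real
  assume "0 < \<epsilon>"
  then obtain N where N: "\<And>n. N \<le> n \<Longrightarrow> norm (e n - 0) < \<epsilon>^2 / 2"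
    using LIMSEQ_D[OF \<open>e \<longlonglongrightarrow> 0\<close>, of "\<epsilon>^2 / 2"] by auto
  have "dist (f n) (f k) < \<epsilon>" if "N \<le> n" and "N \<le> k" for n k
  proof (rule power2_less_imp_less)
    show "(dist (f n) (f k))^2 < \<epsilon>^2"
      using dist_le[of n k] N[OF \<open>N \<le> n\<close>] N[OF \<open>N \<le> k\<close>] by simp
  qed (use \<open>0 < \<epsilon>\<close> in simp)
  then show "\<exists>N. \<forall>n\<ge>N. \<forall>k\<ge>N. dist (f n) (f k) < \<epsilon>"
    by blast
qed

lemma nearest_point_exists:
  fixes M :: "'a::chilbert set"
  assumes "closed M" and "m0 \<in> M"
    and midpoint: "\<And>a b. a \<in> M \<Longrightarrow> b \<in> M \<Longrightarrow> scaleR (1/2) (a + b) \<in> M"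
  obtains m where "m \<in> M" and "\<And>m'. m' \<in> M \<Longrightarrow> norm (v - m) \<le> norm (v - m')"
proof -
  define d where "d = Inf ((\<lambda>m. norm (v - m)) ` M)"
  have bdd: "bdd_below ((\<lambda>m. norm (v - m)) ` M)"
    by (intro bdd_belowI[of _ 0]) auto
  have d_le: "d \<le> norm (v - m)" if "m \<in> M" for m
    unfolding d_def using bdd that by (intro cInf_lower) auto
  have d0: "0 \<le> d"
    unfolding d_def using assms(2) by (intro cInf_greatest) auto
  have "d \<in> closure ((\<lambda>m. norm (v - m)) ` M)"
    unfolding d_def using assms(2) bdd by (intro closure_contains_Inf) auto
  then obtain ds where ds: "\<And>n. ds n \<in> (\<lambda>m. norm (v - m)) ` M" and "ds \<longlonglongrightarrow> d"
    unfolding closure_sequential by blast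
  from ds have "\<forall>n. \<exists>m. m \<in> M \<and> ds n = norm (v - m)"
    by blast
  from choice[OF this] obtain ms where ms: "\<And>n. ms n \<in> M" and "ds = (\<lambda>n. norm (v - ms n))"
    by (auto simp: fun_eq_iff)
  with \<open>ds \<longlonglongrightarrow> d\<close> have lim_d: "(\<lambda>n. norm (v - ms n)) \<longlonglongrightarrow> d"
    by simp
  have "(\<lambda>n. 2 * ((norm (v - ms n))^2 - d^2)) \<longlonglongrightarrow> 2 * (d^2 - d^2)"
    by (intro tendsto_intros lim_d)
  then have e_lim: "(\<lambda>n. 2 * ((norm (v - ms n))^2 - d^2)) \<longlonglongrightarrow> 0"
    by simp
  have "(dist (ms n) (ms k))^2 \<le> 2 * ((norm (v - ms n))^2 - d^2) + 2 * ((norm (v - ms k))^2 - d^2)" for n k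
  proof -
    have "d^2 \<le> (norm (v - scaleR (1/2) (ms n + ms k)))^2"
      using d_le[OF midpoint[OF ms ms]] d0 by (rule power_mono)
    then show ?thesis
      using parallelogram_midpoint[of "ms n" "ms k" v] unfolding dist_norm right_diff_distrib by linarith
  qed
  with e_lim have "Cauchy ms"
    by (rule Cauchy_if_power2_dist_le)
  then obtain m where lim: "ms \<longlonglongrightarrow> m"
    using Cauchy_convergent_iff convergent_def by blast
  have "norm (v - m) = d"
    using tendsto_unique[OF _ tendsto_norm[OF tendsto_diff[OF tendsto_const lim]] lim_d] by simp
  show ?thesis
  proof (rule that)
    show "m \<in> M"
      using closed_sequentially[OF assms(1) ms lim] .
    show "norm (v - m) \<le> norm (v - m')" if "m' \<in> M" for m'
      using d_le[OF that] \<open>norm (v - m) = d\<close> by simp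
  qed
qed

lemma closed_zero_set:
  fixes \<phi> :: "'a::real_normed_vector \<Rightarrow> 'b::real_normed_vector"
  assumes add: "\<And>x y. \<phi> (x + y) = \<phi> x + \<phi> y" and bounded: "\<And>x. norm (\<phi> x) \<le> K * norm x"
  shows "closed {v. \<phi> v = 0}"
proof -
  interpret \<phi>: additive \<phi>
    by standard (rule add)
  have "(max K 0)-lipschitz_on UNIV \<phi>"
  proof (rule lipschitz_onI)
    fix x y :: 'a
    have "norm (\<phi> (x - y)) \<le> max K 0 * norm (x - y)"
      using bounded[of "x - y"] by (meson max.cobounded1 mult_right_mono norm_ge_zero order_trans)
    then show "dist (\<phi> x) (\<phi> y) \<le> max K 0 * dist x y"
      by (simp add: dist_norm \<phi>.diff)
  qed simp
  then show ?thesis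
    by (intro closed_Collect_eq continuous_on_const lipschitz_on_continuous_on)
qed

lemma representation_by_orthogonal:
  fixes \<phi> :: "'a::chilbert \<Rightarrow> complex"
  assumes add: "\<And>x y. \<phi> (x + y) = \<phi> x + \<phi> y" and scale: "\<And>c x. \<phi> (scaleC c x) = c * \<phi> x"
    and "\<phi> z0 \<noteq> 0" and orth: "\<And>m. \<phi> m = 0 \<Longrightarrow> cinner m z0 = 0"
  shows "\<phi> v = cinner v (scaleC (cnj (\<phi> z0) / complex_of_real ((norm z0)^2)) z0)"
proof -
  interpret \<phi>: additive \<phi>
    by standard (rule add)
  have "z0 \<noteq> 0"
    using \<open>\<phi> z0 \<noteq> 0\<close> \<phi>.zero by auto
  have "\<phi> (v - scaleC (\<phi> v / \<phi> z0) z0) = 0"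
    using \<open>\<phi> z0 \<noteq> 0\<close> by (simp add: \<phi>.diff scale)
  then have "cinner (v - scaleC (\<phi> v / \<phi> z0) z0) z0 = 0"
    by (rule orth)
  then have "cinner v z0 = (\<phi> v / \<phi> z0) * complex_of_real ((norm z0)^2)"
    by (simp add: cinner_left.diff cinner_scaleC_left cinner_self_norm)
  with \<open>z0 \<noteq> 0\<close> \<open>\<phi> z0 \<noteq> 0\<close> show ?thesis
    by (simp add: cinner_scaleC_right del: of_real_power)
qed

lemma riesz_representation:
  fixes \<phi> :: "'a::chilbert \<Rightarrow> complex"
  assumes add: "\<And>x y. \<phi> (x + y) = \<phi> x + \<phi> y"
    and scale: "\<And>c x. \<phi> (scaleC c x) = c * \<phi> x"
    and bounded: "\<And>x. cmod (\<phi> x) \<le> K * norm x"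
  obtains z where "\<And>v. \<phi> v = cinner v z"
proof (cases "\<forall>v. \<phi> v = 0")
  case True
  then show ?thesis
    using that[of 0] by (simp add: cinner_right.zero)
next
  case False
  then obtain v0 where v0: "\<phi> v0 \<noteq> 0"
    by blast
  interpret \<phi>: additive \<phi>
    by standard (rule add)
  define M where "M = {v. \<phi> v = 0}"
  have "closed M"
    unfolding M_def using add bounded by (rule closed_zero_set)
  moreover have "scaleR (1/2) (a + b) \<in> M" if "a \<in> M" "b \<in> M" for a b
    using that by (simp add: M_def scaleR_scaleC scale add)
  moreover have "0 \<in> M"
    by (simp add: M_def \<phi>.zero)
  ultimately obtain m where "m \<in> M" and nearest: "\<And>m'. m' \<in> M \<Longrightarrow> norm (v0 - m) \<le> norm (v0 - m')"
    using nearest_point_exists by blast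
  have "cinner m' (v0 - m) = 0" if "\<phi> m' = 0" for m'
  proof -
    have "cinner (v0 - m) m' = 0"
    proof (rule cinner_eq_0_if_nearest)
      fix t
      have "m + scaleC t m' \<in> M"
        using \<open>m \<in> M\<close> that by (simp add: M_def add scale)
      from nearest[OF this] show "norm (v0 - m) \<le> norm (v0 - m - scaleC t m')"
        by (simp add: algebra_simps)
    qed
    then show ?thesis
      by (metis cinner_commute complex_cnj_zero)
  qed
  moreover have "\<phi> (v0 - m) \<noteq> 0"
    using \<open>m \<in> M\<close> v0 by (simp add: M_def \<phi>.diff)
  ultimately show ?thesis
    using that representation_by_orthogonal[OF add scale] by blast
qed

lemma blin_additive: "blin T \<Longrightarrow> Modules.additive T"
  unfolding blin_def Modules.additive_def by blast

lemma blin_add: "blin T \<Longrightarrow> T (x + y) = T x + T y"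
  unfolding blin_def by blast

lemma blin_scaleC: "blin T \<Longrightarrow> T (scaleC c x) = scaleC c (T x)"
  unfolding blin_def by blast

lemmas blin_zero = additive.zero[OF blin_additive]
  and blin_sum = additive.sum[OF blin_additive]

lemma cinner_eq_imp_eq:
  assumes "\<And>v. cinner v z = cinner v z'"
  shows "z = z'"
proof -
  have "cinner (z - z') (z - z') = 0"
    using assms by (simp add: cinner_right.diff)
  then show ?thesis
    by (simp add: cinner_self_eq_0)
qed

lemma cinner_adj_right:
  assumes "blin T"
  shows "cinner (T v) y = cinner v (adj T y)"
proof -
  obtain K where K: "\<And>x. norm (T x) \<le> K * norm x"
    using assms unfolding blin_def by blast
  have "cinner (T (x + x')) y = cinner (T x) y + cinner (T x') y" for x x'
    using assms by (simp add: blin_add cinner_left.add)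
  moreover have "cinner (T (scaleC c x)) y = c * cinner (T x) y" for c x
    using assms by (simp add: blin_scaleC cinner_scaleC_left)
  moreover have "cmod (cinner (T x) y) \<le> K * norm y * norm x" for x
  proof -
    have "cmod (cinner (T x) y) \<le> norm (T x) * norm y"
      by (rule norm_cinner_le)
    also have "\<dots> \<le> K * norm x * norm y"
      using K[of x] by (simp add: mult_right_mono)
    finally show ?thesis
      by (simp add: algebra_simps)
  qed
  ultimately obtain z where z: "\<And>v. cinner (T v) y = cinner v z"
    using riesz_representation[of "\<lambda>v. cinner (T v) y" "K * norm y"] by metis
  have "adj T y = z"
    unfolding adj_def by (rule the_equality) (use z cinner_eq_imp_eq in auto)
  with z show ?thesis
    by simp
qed

lemma adj_eqI:
  assumes "blin T" and "\<And>v. cinner (T v) y = cinner v z"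
  shows "adj T y = z"
  using assms by (metis cinner_eq_imp_eq cinner_adj_right)

lemma adj_add: "blin T \<Longrightarrow> adj T (y + y') = adj T y + adj T y'"
  by (rule adj_eqI) (simp_all add: cinner_right.add cinner_adj_right)

lemma adj_scaleC: "blin T \<Longrightarrow> adj T (scaleC c y) = scaleC c (adj T y)"
  by (rule adj_eqI) (simp_all add: cinner_scaleC_right cinner_adj_right)

lemma adj_additive: "blin T \<Longrightarrow> Modules.additive (adj T)"
  by (simp add: Modules.additive_def adj_add)

lemmas adj_diff = additive.diff[OF adj_additive]

section \<open>The Drury--Arveson kernel\<close>

lemma Re_ip_self: "Re (ip z z) = (\<Sum>j\<in>UNIV. (cmod (z$j))^2)"
  unfolding ip_def Re_sum by (simp add: cmod_power2 flip: power2_eq_square)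

lemma cnj_ip: "cnj (ip a b) = ip b a"
  unfolding ip_def by (simp add: mult.commute)

lemma cnj_kd: "cnj (kd a b) = kd b a"
  unfolding kd_def by (simp add: cnj_ip)

lemma power2_norm_ip_le: "(cmod (ip a b))^2 \<le> Re (ip a a) * Re (ip b b)"
proof -
  have "cmod (ip a b) \<le> (\<Sum>j\<in>UNIV. cmod (a$j) * cmod (b$j))"
    unfolding ip_def by (rule order.trans[OF norm_sum]) (simp add: norm_mult)
  then have "(cmod (ip a b))^2 \<le> (\<Sum>j\<in>UNIV. cmod (a$j) * cmod (b$j))^2"
    by (simp add: power_mono)
  also have "\<dots> \<le> (\<Sum>j\<in>UNIV. (cmod (a$j))^2) * (\<Sum>j\<in>UNIV. (cmod (b$j))^2)"
    by (rule Cauchy_Schwarz_ineq_sum)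
  finally show ?thesis
    by (simp add: Re_ip_self)
qed

lemma norm_ip_less_1:
  assumes "a \<in> dball" and "b \<in> dball"
  shows "cmod (ip a b) < 1"
proof -
  have a: "0 \<le> Re (ip a a)" "Re (ip a a) < 1" and b: "0 \<le> Re (ip b b)" "Re (ip b b) < 1"
    using assms by (auto simp: dball_def Re_ip_self intro: sum_nonneg)
  have "Re (ip a a) * Re (ip b b) \<le> Re (ip a a)"
    using a b by (intro mult_left_le) auto
  then have "(cmod (ip a b))^2 < 1"
    using power2_norm_ip_le[of a b] a by linarith
  then show ?thesis
    by (simp add: power_less_one_iff abs_square_less_1)
qed

lemma kd_mult_1_minus_ip:
  assumes "a \<in> dball" and "b \<in> dball"
  shows "kd a b * (1 - ip a b) = 1"
proof -
  have "ip a b \<noteq> 1"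
    using norm_ip_less_1[OF assms] by auto
  then show ?thesis
    unfolding kd_def by (simp add: field_simps)
qed

lemma kd_eq_1_plus: "a \<in> dball \<Longrightarrow> b \<in> dball \<Longrightarrow> kd a b = 1 + kd a b * ip a b"
  using kd_mult_1_minus_ip[of a b] by (simp add: algebra_simps)

lemma geometric_sums_kd:
  assumes "a \<in> dball" and "b \<in> dball"
  shows "(\<lambda>n. (ip a b)^n) sums kd a b"
  using geometric_sums[OF norm_ip_less_1[OF assms]] by (simp add: kd_def divide_inverse)

section \<open>Realizations and the observability operator\<close>

lemma power2_norm_sum_adj_le:
  fixes A :: "'d::finite \<Rightarrow> 'x::chilbert \<Rightarrow> 'x"
  assumes blin: "\<And>j. blin (A j)"
    and row_contraction: "\<And>x. (\<Sum>j\<in>UNIV. (norm (A j x))^2) \<le> (norm x)^2"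
  shows "(norm (\<Sum>j\<in>UNIV. adj (A j) (h j)))^2 \<le> (\<Sum>j\<in>UNIV. (norm (h j))^2)"
proof -
  define z where "z = (\<Sum>j\<in>UNIV. adj (A j) (h j))"
  have "complex_of_real ((norm z)^2) = cinner z (\<Sum>j\<in>UNIV. adj (A j) (h j))"
    by (simp only: cinner_self_norm z_def)
  also have "\<dots> = (\<Sum>j\<in>UNIV. cinner (A j z) (h j))"
    by (simp add: cinner_right.sum cinner_adj_right[OF blin])
  finally have "(norm z)^2 = Re (\<Sum>j\<in>UNIV. cinner (A j z) (h j))"
    by (metis Re_complex_of_real)
  also have "\<dots> \<le> (\<Sum>j\<in>UNIV. norm (A j z) * norm (h j))"
    by (simp add: sum_mono order.trans[OF complex_Re_le_cmod norm_cinner_le])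
  also have "\<dots> \<le> sqrt (\<Sum>j\<in>UNIV. (norm (A j z))^2) * sqrt (\<Sum>j\<in>UNIV. (norm (h j))^2)"
    using Cauchy_Schwarz_sqrt_sum[of "\<lambda>j. (norm (A j z))^2" "\<lambda>j. (norm (h j))^2" UNIV] by simp
  also have "\<dots> \<le> norm z * sqrt (\<Sum>j\<in>UNIV. (norm (h j))^2)"
    using row_contraction[of z] by (intro mult_right_mono) (auto intro: real_le_lsqrt sum_nonneg)
  finally have "(norm z)^2 \<le> norm z * sqrt (\<Sum>j\<in>UNIV. (norm (h j))^2)" .
  then have "norm z \<le> sqrt (\<Sum>j\<in>UNIV. (norm (h j))^2)"
    by (cases "norm z = 0") (auto simp: power2_eq_square intro: sum_nonneg)
  then have "(norm z)^2 \<le> (sqrt (\<Sum>j\<in>UNIV. (norm (h j))^2))^2"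
    by (simp add: power_mono)
  then show ?thesis
    unfolding z_def by (simp add: sum_nonneg)
qed

locale contractive_realization =
  fixes S :: "complex^'d \<Rightarrow> 'u::chilbert \<Rightarrow> 'y::chilbert"
    and A :: "'d::finite \<Rightarrow> 'x::chilbert \<Rightarrow> 'x"
    and B :: "'d \<Rightarrow> 'u \<Rightarrow> 'x"
    and C :: "'x \<Rightarrow> 'y"
    and D :: "'u \<Rightarrow> 'y"
  assumes realization: "realization S A B C D"
    and contractive: "colig_contractive A B C D"
    and blin_S: "\<And>l. l \<in> dball \<Longrightarrow> blin (S l)"
begin

lemma blin_A: "blin (A j)" and blin_B: "blin (B j)" and blin_C: "blin C" and blin_D: "blin D"
  using realization unfolding realization_def by auto

lemma S_eq: "l \<in> dball \<Longrightarrow> S l u = D u + C (resolv A l (ZB B l u))"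
  using realization unfolding realization_def by auto

lemma ZA_additive: "Modules.additive (ZA A l)"
  unfolding Modules.additive_def ZA_def by (simp add: blin_add[OF blin_A] scaleC_right.add sum.distrib)

lemmas ZA_add = additive.add[OF ZA_additive]
  and ZA_sum = additive.sum[OF ZA_additive]

lemma ZA_scaleC: "ZA A l (scaleC c x) = scaleC c (ZA A l x)"
  unfolding ZA_def by (simp add: blin_scaleC[OF blin_A] scaleC_right.sum scaleC_left_commute)

lemma resolv_ex1: "l \<in> dball \<Longrightarrow> \<exists>!w. w - ZA A l w = x"
  using realization unfolding realization_def bij_iff by blast

lemma resolv_eq: "l \<in> dball \<Longrightarrow> resolv A l x - ZA A l (resolv A l x) = x"
  unfolding resolv_def by (rule theI'[OF resolv_ex1])

lemma resolv_eqI: "l \<in> dball \<Longrightarrow> w - ZA A l w = x \<Longrightarrow> resolv A l x = w"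
  using resolv_ex1 resolv_eq by blast

lemma resolv_add:
  assumes l: "l \<in> dball"
  shows "resolv A l (x + y) = resolv A l x + resolv A l y"
proof (rule resolv_eqI[OF l])
  have "resolv A l x + resolv A l y - ZA A l (resolv A l x + resolv A l y)
      = (resolv A l x - ZA A l (resolv A l x)) + (resolv A l y - ZA A l (resolv A l y))"
    by (simp add: ZA_add algebra_simps)
  then show "resolv A l x + resolv A l y - ZA A l (resolv A l x + resolv A l y) = x + y"
    by (simp only: resolv_eq[OF l])
qed

lemma resolv_scaleC: "l \<in> dball \<Longrightarrow> resolv A l (scaleC c x) = scaleC c (resolv A l x)"
  by (rule resolv_eqI) (auto simp: ZA_scaleC resolv_eq scaleC_right.diff[symmetric])

lemma resolv_expansion:
  assumes l: "l \<in> dball"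
  shows "resolv A l x = x + (\<Sum>j\<in>UNIV. scaleC (l$j) (resolv A l (A j x)))"
proof (rule resolv_eqI[OF l])
  define v where "v = (\<Sum>j\<in>UNIV. scaleC (l$j) (resolv A l (A j x)))"
  have "v - ZA A l v = (\<Sum>j\<in>UNIV. scaleC (l$j) (resolv A l (A j x) - ZA A l (resolv A l (A j x))))"
    unfolding v_def by (simp add: ZA_sum ZA_scaleC scaleC_right.diff sum_subtractf)
  also have "\<dots> = (\<Sum>j\<in>UNIV. scaleC (l$j) (A j x))"
    by (simp only: resolv_eq[OF l])
  also have "\<dots> = ZA A l x"
    unfolding ZA_def ..
  finally show "x + v - ZA A l (x + v) = x"
    by (simp add: ZA_add algebra_simps)
qed

text \<open>obs x is the function O x = C (I - Z(.) A)^-1 x, O being the observability operator.\<close>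
definition obs :: "'x \<Rightarrow> complex^'d \<Rightarrow> 'y" where
  "obs x l = C (resolv A l x)"

lemma obs_expansion: "l \<in> dball \<Longrightarrow> obs x l = C x + (\<Sum>j\<in>UNIV. scaleC (l$j) (obs (A j x) l))"
  unfolding obs_def by (subst resolv_expansion) (auto simp: blin_add[OF blin_C] blin_sum[OF blin_C] blin_scaleC[OF blin_C])

lemma obs_add: "l \<in> dball \<Longrightarrow> obs (x + y) l = obs x l + obs y l"
  unfolding obs_def by (simp add: resolv_add blin_add[OF blin_C])

lemma obs_scaleC: "l \<in> dball \<Longrightarrow> obs (scaleC c x) l = scaleC c (obs x l)"
  unfolding obs_def by (simp add: resolv_scaleC blin_scaleC[OF blin_C])

text \<open>The expansion applied twice, with the second-order coefficients averaged over
  (j, k) and (k, j), which does not change the sum since m_j m_k is symmetric.\<close>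
lemma obs_symmetrized_expansion:
  assumes m: "m \<in> dball"
  shows "obs x m = C x + (\<Sum>j\<in>UNIV. scaleC (m$j) (C (A j x)
    + (\<Sum>k\<in>UNIV. scaleC (m$k) (obs (scaleC (1/2) (A k (A j x) + A j (A k x))) m))))"
proof -
  define a where "a = (\<lambda>j k. obs (A k (A j x)) m)"
  have "(\<Sum>j\<in>UNIV. scaleC (m$j) (\<Sum>k\<in>UNIV. scaleC (m$k) (obs (scaleC (1/2) (A k (A j x) + A j (A k x))) m)))
      = (\<Sum>j\<in>UNIV. \<Sum>k\<in>UNIV. scaleC (m$j * m$k) (scaleC (1/2) (a j k + a k j)))"
    by (simp add: a_def obs_scaleC[OF m] obs_add[OF m] scaleC_right.sum scaleC_scaleC)
  also have "\<dots> = scaleC (1/2) (\<Sum>j\<in>UNIV. \<Sum>k\<in>UNIV. scaleC (m$j * m$k) (a j k))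
      + scaleC (1/2) (\<Sum>j\<in>UNIV. \<Sum>k\<in>UNIV. scaleC (m$j * m$k) (a k j))"
    by (simp add: scaleC_right.add scaleC_right.sum scaleC_scaleC sum.distrib mult.commute)
  also have "(\<Sum>j\<in>UNIV. \<Sum>k\<in>UNIV. scaleC (m$j * m$k) (a k j)) = (\<Sum>j\<in>UNIV. \<Sum>k\<in>UNIV. scaleC (m$j * m$k) (a j k))"
    by (subst sum.swap) (simp add: mult.commute)
  also have "scaleC (1/2) (\<Sum>j\<in>UNIV. \<Sum>k\<in>UNIV. scaleC (m$j * m$k) (a j k))
      + scaleC (1/2) (\<Sum>j\<in>UNIV. \<Sum>k\<in>UNIV. scaleC (m$j * m$k) (a j k))
      = (\<Sum>j\<in>UNIV. \<Sum>k\<in>UNIV. scaleC (m$j * m$k) (a j k))"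
    by (simp add: scaleC_add_left[symmetric] scaleC_one)
  also have "\<dots> = (\<Sum>j\<in>UNIV. scaleC (m$j) (\<Sum>k\<in>UNIV. scaleC (m$k) (a j k)))"
    by (simp add: scaleC_right.sum scaleC_scaleC)
  finally have symmetrized: "(\<Sum>j\<in>UNIV. scaleC (m$j) (\<Sum>k\<in>UNIV. scaleC (m$k) (obs (scaleC (1/2) (A k (A j x) + A j (A k x))) m)))
      = (\<Sum>j\<in>UNIV. scaleC (m$j) (\<Sum>k\<in>UNIV. scaleC (m$k) (a j k)))" .
  have "obs x m = C x + (\<Sum>j\<in>UNIV. scaleC (m$j) (C (A j x) + (\<Sum>k\<in>UNIV. scaleC (m$k) (a j k))))"
    unfolding a_def by (subst obs_expansion[OF m]) (subst obs_expansion[OF m], simp)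
  also have "\<dots> = C x + (\<Sum>j\<in>UNIV. scaleC (m$j) (C (A j x)))
      + (\<Sum>j\<in>UNIV. scaleC (m$j) (\<Sum>k\<in>UNIV. scaleC (m$k) (a j k)))"
    by (simp only: scaleC_right.add sum.distrib add.assoc)
  also have "\<dots> = C x + (\<Sum>j\<in>UNIV. scaleC (m$j) (C (A j x) + (\<Sum>k\<in>UNIV. scaleC (m$k)
      (obs (scaleC (1/2) (A k (A j x) + A j (A k x))) m))))"
    by (subst symmetrized[symmetric]) (simp only: scaleC_right.add sum.distrib add.assoc)
  finally show ?thesis .
qed

lemma contractive_A_C: "(\<Sum>j\<in>UNIV. (norm (A j x))^2) + (norm (C x))^2 \<le> (norm x)^2"
  using contractive[unfolded colig_contractive_def, rule_format, of x 0]
  by (simp add: blin_zero[OF blin_B] blin_zero[OF blin_D])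

lemma row_contractive_A: "(\<Sum>j\<in>UNIV. (norm (A j x))^2) \<le> (norm x)^2"
  using contractive_A_C[of x] zero_le_power2[of "norm (C x)"] by linarith

lemma ZAstar_scaleC: "ZAstar A z (scaleC c x) = scaleC c (ZAstar A z x)"
  unfolding ZAstar_def by (simp add: adj_scaleC[OF blin_A] scaleC_right.sum scaleC_left_commute)

lemma ZAstar_diff: "ZAstar A z (x - y) = ZAstar A z x - ZAstar A z y"
  unfolding ZAstar_def by (simp add: adj_diff[OF blin_A] scaleC_right.diff sum_subtractf)

lemma power2_norm_ZAstar_le: "(norm (ZAstar A z w))^2 \<le> Re (ip z z) * (norm w)^2"
proof -
  have "(norm (ZAstar A z w))^2 \<le> (\<Sum>j\<in>UNIV. (norm (scaleC (cnj (z$j)) w))^2)"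
    unfolding ZAstar_def by (rule power2_norm_sum_adj_le[OF blin_A row_contractive_A])
  also have "\<dots> = Re (ip z z) * (norm w)^2"
    by (simp add: norm_scaleC Re_ip_self power_mult_distrib sum_distrib_right)
  finally show ?thesis .
qed

text \<open>For z in the ball, w \<mapsto> C^* y + A^* Z(z)^* w is a contraction with constant |z|,
  so (I - A^* Z(z)^*)^-1 C^* y exists by Banach's fixed point theorem.\<close>
lemma obs_adj_ex1:
  assumes z: "z \<in> dball"
  shows "\<exists>!w. w - ZAstar A z w = adj C y"
proof -
  define r where "r = sqrt (Re (ip z z))"
  have r: "0 \<le> r" "r < 1"
    using z unfolding r_def dball_def by (auto simp: Re_ip_self intro: sum_nonneg)
  have "\<exists>!w. adj C y + ZAstar A z w = w"
  proof (rule banach_fix_type[OF r], intro allI)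
    fix x x'
    have "(norm (ZAstar A z (x - x')))^2 \<le> (r * norm (x - x'))^2"
      using power2_norm_ZAstar_le[of z "x - x'"] r unfolding r_def by (simp add: power_mult_distrib)
    then have "norm (ZAstar A z (x - x')) \<le> r * norm (x - x')"
      by (rule power2_le_imp_le) (use r in simp)
    then show "dist (adj C y + ZAstar A z x) (adj C y + ZAstar A z x') \<le> r * dist x x'"
      by (simp add: dist_norm ZAstar_diff)
  qed
  moreover have "adj C y + ZAstar A z w = w \<longleftrightarrow> w - ZAstar A z w = adj C y" for w
    by (auto simp: algebra_simps)
  ultimately show ?thesis
    by simp
qed

text \<open>The adjoint of the observability operator on the kernel function k_z y:
  (I - A^* Z(z)^*)^-1 C^* y.\<close>
definition obs_adj :: "complex^'d \<Rightarrow> 'y \<Rightarrow> 'x" where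
  "obs_adj z y = (THE w. w - ZAstar A z w = adj C y)"

lemma obs_adj_eq: "z \<in> dball \<Longrightarrow> obs_adj z y - ZAstar A z (obs_adj z y) = adj C y"
  unfolding obs_adj_def by (rule theI'[OF obs_adj_ex1])

lemma obs_adj_eqI: "z \<in> dball \<Longrightarrow> w - ZAstar A z w = adj C y \<Longrightarrow> obs_adj z y = w"
  using obs_adj_ex1 obs_adj_eq by blast

lemma obs_adj_scaleC:
  assumes z: "z \<in> dball"
  shows "obs_adj z (scaleC c y) = scaleC c (obs_adj z y)"
proof (rule obs_adj_eqI[OF z])
  show "scaleC c (obs_adj z y) - ZAstar A z (scaleC c (obs_adj z y)) = adj C (scaleC c y)"
    using obs_adj_eq[OF z, of y]
    by (simp add: ZAstar_scaleC adj_scaleC[OF blin_C] scaleC_right.diff[symmetric])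
qed

lemma cinner_obs_left:
  assumes z: "z \<in> dball"
  shows "cinner (obs x z) y = cinner x (obs_adj z y)"
proof -
  define w where "w = resolv A z x"
  define e where "e = obs_adj z y"
  have "cinner (obs x z) y = cinner w (e - ZAstar A z e)"
    unfolding obs_def w_def e_def by (simp add: cinner_adj_right[OF blin_C] obs_adj_eq[OF z])
  also have "\<dots> = cinner w e - (\<Sum>j\<in>UNIV. cinner (A j w) (scaleC (cnj (z$j)) e))"
    unfolding ZAstar_def by (simp add: cinner_right.diff cinner_right.sum cinner_adj_right[OF blin_A])
  also have "\<dots> = cinner (w - ZA A z w) e"
    unfolding ZA_def by (simp add: cinner_left.diff cinner_left.sum cinner_scaleC_left cinner_scaleC_right)
  finally show ?thesis
    unfolding e_def w_def resolv_eq[OF z] .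
qed

lemma adj_S:
  assumes z: "z \<in> dball"
  shows "adj (S z) y = adj D y + (\<Sum>j\<in>UNIV. adj (B j) (scaleC (cnj (z$j)) (obs_adj z y)))"
proof (rule adj_eqI[OF blin_S[OF z]])
  fix u
  have "cinner (S z u) y = cinner (D u) y + cinner (obs (ZB B z u) z) y"
    unfolding S_eq[OF z] obs_def by (simp add: cinner_left.add)
  also have "\<dots> = cinner u (adj D y) + cinner (ZB B z u) (obs_adj z y)"
    by (simp add: cinner_adj_right[OF blin_D] cinner_obs_left[OF z])
  also have "cinner (ZB B z u) (obs_adj z y) = (\<Sum>j\<in>UNIV. cinner u (adj (B j) (scaleC (cnj (z$j)) (obs_adj z y))))"
    unfolding ZB_def
    by (simp add: cinner_left.sum cinner_scaleC_left cinner_scaleC_right cinner_adj_right[OF blin_B, symmetric])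
  finally show "cinner (S z u) y = cinner u (adj D y + (\<Sum>j\<in>UNIV. adj (B j) (scaleC (cnj (z$j)) (obs_adj z y))))"
    by (simp add: cinner_right.add cinner_right.sum)
qed

lemma eq_0_if_orthogonal_obs_adj:
  assumes "observable A C" and orth: "\<And>l y. l \<in> dball \<Longrightarrow> cinner v (obs_adj l y) = 0"
  shows "v = 0"
proof -
  have "C (resolv A l v) = 0" if "l \<in> dball" for l
    using orth[OF that, of "obs v l"] unfolding cinner_obs_left[OF that, symmetric]
    by (simp add: obs_def cinner_self_eq_0)
  then show ?thesis
    using \<open>observable A C\<close> unfolding observable_def by blast
qed

end

locale weakly_coisometric_realization = contractive_realization S A B C D
  for S :: "complex^'d \<Rightarrow> 'u::chilbert \<Rightarrow> 'y::chilbert"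
    and A :: "'d::finite \<Rightarrow> 'x::chilbert \<Rightarrow> 'x"
    and B :: "'d \<Rightarrow> 'u \<Rightarrow> 'x"
    and C :: "'x \<Rightarrow> 'y"
    and D :: "'u \<Rightarrow> 'y" +
  assumes weakly_coisometric: "weakly_coisometric A B C D"
begin

lemma dgen_eq: "dgen A C z y = (\<lambda>j. scaleC (cnj (z$j)) (obs_adj z y))"
  unfolding dgen_def obs_adj_def Let_def ..

lemma sum_adj_A_obs_adj:
  "z \<in> dball \<Longrightarrow> (\<Sum>j\<in>UNIV. adj (A j) (scaleC (cnj (z$j)) (obs_adj z y))) = obs_adj z y - adj C y"
  using obs_adj_eq[of z y] unfolding ZAstar_def by (simp add: algebra_simps)

lemma dspan_subset_dspace: "dspan A C \<subseteq> dspace A C"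
  unfolding dspace_def by (intro subsetI CollectI allI impI bexI) auto

text \<open>The isometry of U^* on \<D> (+) Y, tested on a combination of two generators of \<D>.\<close>
lemma weakly_coisometric_pair:
  assumes z1: "z1 \<in> dball" and z2: "z2 \<in> dball"
  shows "(norm (obs_adj z1 y1 + scaleC c (obs_adj z2 y2)))^2
      + (norm (adj (S z1) y1 + scaleC c (adj (S z2) y2)))^2
    = (\<Sum>j\<in>UNIV. (norm (scaleC (cnj (z1$j)) (obs_adj z1 y1) + scaleC c (scaleC (cnj (z2$j)) (obs_adj z2 y2))))^2)
      + (norm (y1 + scaleC c y2))^2"
proof -
  define cs where "cs = (\<lambda>i::nat. if i = 0 then 1 else c)"
  define zs where "zs = (\<lambda>i::nat. if i = 0 then z1 else z2)"
  define ys where "ys = (\<lambda>i::nat. if i = 0 then y1 else y2)"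
  define h where "h = (\<lambda>j. \<Sum>i<2. scaleC (cs i) (dgen A C (zs i) (ys i) j))"
  have "h \<in> dspan A C"
    unfolding dspan_def h_def
    by (intro CollectI exI[of _ 2] exI[of _ cs] exI[of _ zs] exI[of _ ys]) (auto simp: zs_def z1 z2)
  then have "h \<in> dspace A C"
    using dspan_subset_dspace by blast
  have two: "{..<2::nat} = {0, 1}"
    by auto
  have h: "h j = scaleC (cnj (z1$j)) (obs_adj z1 y1) + scaleC c (scaleC (cnj (z2$j)) (obs_adj z2 y2))" for j
    unfolding h_def two by (simp add: cs_def zs_def ys_def dgen_eq scaleC_one)
  define y where "y = y1 + scaleC c y2"
  have "(\<Sum>j\<in>UNIV. adj (A j) (h j))
      = (\<Sum>j\<in>UNIV. adj (A j) (scaleC (cnj (z1$j)) (obs_adj z1 y1)))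
        + scaleC c (\<Sum>j\<in>UNIV. adj (A j) (scaleC (cnj (z2$j)) (obs_adj z2 y2)))"
    unfolding h by (simp only: adj_add[OF blin_A] adj_scaleC[OF blin_A] sum.distrib scaleC_right.sum)
  then have adj_A: "(\<Sum>j\<in>UNIV. adj (A j) (h j)) + adj C y = obs_adj z1 y1 + scaleC c (obs_adj z2 y2)"
    unfolding sum_adj_A_obs_adj[OF z1] sum_adj_A_obs_adj[OF z2] y_def
    by (simp add: adj_add[OF blin_C] adj_scaleC[OF blin_C] scaleC_right.diff algebra_simps)
  have adj_B: "(\<Sum>j\<in>UNIV. adj (B j) (h j)) + adj D y = adj (S z1) y1 + scaleC c (adj (S z2) y2)"
    unfolding h y_def adj_S[OF z1] adj_S[OF z2]
    by (simp add: adj_add[OF blin_B] adj_scaleC[OF blin_B] sum.distrib scaleC_right.sum[symmetric]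
        adj_add[OF blin_D] adj_scaleC[OF blin_D] scaleC_right.add algebra_simps)
  have "(norm ((\<Sum>j\<in>UNIV. adj (A j) (h j)) + adj C y))^2 + (norm ((\<Sum>j\<in>UNIV. adj (B j) (h j)) + adj D y))^2
      = (\<Sum>j\<in>UNIV. (norm (h j))^2) + (norm y)^2"
    using weakly_coisometric \<open>h \<in> dspace A C\<close> unfolding weakly_coisometric_def by blast
  then show ?thesis
    unfolding adj_A adj_B unfolding h y_def .
qed

lemma obs_adj_gram_identity:
  assumes z1: "z1 \<in> dball" and z2: "z2 \<in> dball"
  shows "cinner (obs_adj z1 y1) (obs_adj z2 y2) + cinner (adj (S z1) y1) (adj (S z2) y2)
    = ip z2 z1 * cinner (obs_adj z1 y1) (obs_adj z2 y2) + cinner y1 y2"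
proof -
  define e1 where "e1 = obs_adj z1 y1"
  define e2 where "e2 = obs_adj z2 y2"
  define s1 where "s1 = adj (S z1) y1"
  define s2 where "s2 = adj (S z2) y2"
  define g1 where "g1 = (\<lambda>j. scaleC (cnj (z1$j)) e1)"
  define g2 where "g2 = (\<lambda>j. scaleC (cnj (z2$j)) e2)"
  have pair: "(norm (e1 + scaleC c e2))^2 + (norm (s1 + scaleC c s2))^2
      = (\<Sum>j\<in>UNIV. (norm (g1 j + scaleC c (g2 j)))^2) + (norm (y1 + scaleC c y2))^2" for c
    using weakly_coisometric_pair[OF z1 z2, of y1 c y2] unfolding e1_def e2_def s1_def s2_def g1_def g2_def .
  have "cinner e1 e2 + cinner s1 s2
     = (1/4) * (\<Sum>k<(4::nat). \<i>^k * complex_of_real ((norm (e1 + scaleC (\<i>^k) e2))^2 + (norm (s1 + scaleC (\<i>^k) s2))^2))"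
    by (simp only: cinner_polarization[of e1 e2] cinner_polarization[of s1 s2] sum_lessThan_4 of_real_add)
      (simp add: algebra_simps)
  also have "\<dots> = (1/4) * (\<Sum>k<(4::nat). \<i>^k * complex_of_real ((\<Sum>j\<in>UNIV. (norm (g1 j + scaleC (\<i>^k) (g2 j)))^2) + (norm (y1 + scaleC (\<i>^k) y2))^2))"
    by (simp only: pair)
  also have "\<dots> = (\<Sum>j\<in>UNIV. cinner (g1 j) (g2 j)) + cinner y1 y2"
    by (simp only: cinner_polarization[of "g1 _" "g2 _"] cinner_polarization[of y1 y2] sum_lessThan_4 of_real_add of_real_sum)
      (simp add: algebra_simps sum.distrib sum_distrib_left sum_subtractf sum_negf)
  also have "(\<Sum>j\<in>UNIV. cinner (g1 j) (g2 j)) = ip z2 z1 * cinner e1 e2"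
    unfolding g1_def g2_def ip_def by (simp add: cinner_scaleC_left cinner_scaleC_right sum_distrib_left algebra_simps)
  finally show ?thesis
    unfolding e1_def e2_def s1_def s2_def .
qed

text \<open>In operator terms: O O^* = I - M_S M_S^* on kernel functions.\<close>
lemma cinner_obs_adj:
  assumes z1: "z1 \<in> dball" and z2: "z2 \<in> dball"
  shows "cinner (obs_adj z1 y1) (obs_adj z2 y2) = kd z2 z1 * (cinner y1 y2 - cinner (adj (S z1) y1) (adj (S z2) y2))"
proof -
  have identity: "cinner (obs_adj z1 y1) (obs_adj z2 y2) * (1 - ip z2 z1)
      = cinner y1 y2 - cinner (adj (S z1) y1) (adj (S z2) y2)"
    using obs_adj_gram_identity[OF z1 z2, of y1 y2] by (simp add: algebra_simps)
  have "cinner (obs_adj z1 y1) (obs_adj z2 y2) = (kd z2 z1 * (1 - ip z2 z1)) * cinner (obs_adj z1 y1) (obs_adj z2 y2)"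
    using kd_mult_1_minus_ip[OF z2 z1] by simp
  also have "\<dots> = kd z2 z1 * (cinner (obs_adj z1 y1) (obs_adj z2 y2) * (1 - ip z2 z1))"
    by (simp only: mult_ac)
  finally show ?thesis
    unfolding identity .
qed

end

section \<open>Finite combinations of kernel functions\<close>

lemma sum_list_map_swap:
  fixes f :: "'a \<Rightarrow> 'b \<Rightarrow> 'c::comm_monoid_add"
  shows "(\<Sum>x\<leftarrow>xs. \<Sum>y\<leftarrow>ys. f x y) = (\<Sum>y\<leftarrow>ys. \<Sum>x\<leftarrow>xs. f x y)"
  by (induction xs) (simp_all add: sum_list_addf)

lemma sum_list_map_sum:
  fixes f :: "'a \<Rightarrow> 'b \<Rightarrow> 'c::comm_monoid_add"
  shows "(\<Sum>x\<leftarrow>xs. \<Sum>j\<in>J. f x j) = (\<Sum>j\<in>J. \<Sum>x\<leftarrow>xs. f x j)"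
  by (induction xs) (simp_all add: sum.distrib)

lemma sum_list_map_eq_sum_nth: "(\<Sum>x\<leftarrow>xs. f x) = (\<Sum>i<length xs. f (xs ! i))"
  by (induction xs) (simp_all add: sum.lessThan_Suc_shift del: sum.lessThan_Suc)

lemma cnj_sum_list_map: "cnj (\<Sum>x\<leftarrow>xs. f x) = (\<Sum>x\<leftarrow>xs. cnj (f x))"
  by (induction xs) simp_all

lemma sums_sum_list_map:
  fixes f :: "'a \<Rightarrow> nat \<Rightarrow> 'b::real_normed_vector"
  shows "(\<And>x. x \<in> set xs \<Longrightarrow> f x sums g x) \<Longrightarrow> (\<lambda>n. \<Sum>x\<leftarrow>xs. f x n) sums (\<Sum>x\<leftarrow>xs. g x)"
  by (induction xs) (auto intro: sums_add)

text \<open>A list K of pairs (z, y) with z in the ball encodes the element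
  \<Sum>(z, y) \<in> K. k(., z) y of H_Y(k_d). Then kernel_pair f K is the inner product of f with it,
  and kernel_gram K K' is the inner product of the elements encoded by K and K'.\<close>
definition in_dball :: "((complex^'d) \<times> 'y) list \<Rightarrow> bool" where
  "in_dball K \<longleftrightarrow> (\<forall>a\<in>set K. fst a \<in> dball)"

definition kernel_sum :: "((complex^'d) \<times> 'y::chilbert) list \<Rightarrow> complex^'d \<Rightarrow> 'y" where
  "kernel_sum K m = (\<Sum>a\<leftarrow>K. scaleC (kd m (fst a)) (snd a))"

definition kernel_pair :: "(complex^'d \<Rightarrow> 'y::chilbert) \<Rightarrow> ((complex^'d) \<times> 'y) list \<Rightarrow> complex" where
  "kernel_pair f K = (\<Sum>a\<leftarrow>K. cinner (f (fst a)) (snd a))"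

definition kernel_gram :: "((complex^'d) \<times> 'y::chilbert) list \<Rightarrow> ((complex^'d) \<times> 'y) list \<Rightarrow> complex" where
  "kernel_gram K K' = (\<Sum>a\<leftarrow>K. \<Sum>b\<leftarrow>K'. kd (fst b) (fst a) * cinner (snd a) (snd b))"

definition kernel_scale :: "complex \<Rightarrow> ((complex^'d) \<times> 'y::chilbert) list \<Rightarrow> ((complex^'d) \<times> 'y) list" where
  "kernel_scale t K = map (\<lambda>a. (fst a, scaleC t (snd a))) K"

lemma in_dball_Nil [simp]: "in_dball []"
  by (simp add: in_dball_def)

lemma in_dball_append [simp]: "in_dball (K @ K') \<longleftrightarrow> in_dball K \<and> in_dball K'"
  unfolding in_dball_def by auto

lemma in_dball_kernel_scale [simp]: "in_dball (kernel_scale t K) \<longleftrightarrow> in_dball K"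
  unfolding in_dball_def kernel_scale_def by auto

lemma kernel_pair_append: "kernel_pair f (K @ K') = kernel_pair f K + kernel_pair f K'"
  unfolding kernel_pair_def by simp

lemma kernel_pair_kernel_scale: "kernel_pair f (kernel_scale t K) = cnj t * kernel_pair f K"
  unfolding kernel_pair_def kernel_scale_def by (simp add: o_def cinner_scaleC_right sum_list_const_mult)

lemma kernel_pair_add: "kernel_pair (\<lambda>m. f m + g m) K = kernel_pair f K + kernel_pair g K"
  unfolding kernel_pair_def by (simp add: cinner_left.add sum_list_addf)

lemma kernel_pair_scaleC: "kernel_pair (\<lambda>m. scaleC c (f m)) K = c * kernel_pair f K"
  unfolding kernel_pair_def by (simp add: cinner_scaleC_left sum_list_const_mult)

lemma kernel_pair_cong: "in_dball K \<Longrightarrow> (\<And>m. m \<in> dball \<Longrightarrow> f m = g m) \<Longrightarrow> kernel_pair f K = kernel_pair g K"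
  unfolding kernel_pair_def in_dball_def by (intro arg_cong[where f = sum_list] map_cong) auto

lemma kernel_pair_kernel_sum: "kernel_pair (kernel_sum K) K' = kernel_gram K K'"
  unfolding kernel_pair_def kernel_sum_def kernel_gram_def
  by (simp add: cinner_left.sum_list_map cinner_scaleC_left) (rule sum_list_map_swap)

lemma cnj_kernel_gram: "cnj (kernel_gram K K') = kernel_gram K' K"
  unfolding kernel_gram_def by (simp add: cnj_sum_list_map cnj_kd cinner_commute[symmetric]) (rule sum_list_map_swap)

lemma kernel_gram_append_left: "kernel_gram (K1 @ K2) K' = kernel_gram K1 K' + kernel_gram K2 K'"
  unfolding kernel_gram_def by simp

lemma kernel_gram_append_right: "kernel_gram K (K1 @ K2) = kernel_gram K K1 + kernel_gram K K2"
  unfolding kernel_gram_def by (simp add: sum_list_addf)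

lemma kernel_gram_scale_left: "kernel_gram (kernel_scale t K) K' = t * kernel_gram K K'"
  unfolding kernel_gram_def kernel_scale_def
  by (simp add: o_def cinner_scaleC_left sum_list_const_mult[symmetric] algebra_simps)

lemma kernel_gram_scale_right: "kernel_gram K (kernel_scale t K') = cnj t * kernel_gram K K'"
  unfolding kernel_gram_def kernel_scale_def
  by (simp add: o_def cinner_scaleC_right sum_list_const_mult[symmetric] algebra_simps)

lemma kernel_gram_self_real: "kernel_gram K K = complex_of_real (Re (kernel_gram K K))"
  using cnj_kernel_gram[of K K] by (simp add: complex_eq_iff)

text \<open>Expanding k(z', z) = \<Sum>n. <z', z>^n writes kernel_gram K K as a series whose n-th term
  is a sum of squared norms, via the identity <z', z>^(n+1) = \<Sum>j. cnj z_j z'_j <z', z>^n.\<close>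
definition kernel_gram_term :: "nat \<Rightarrow> ((complex^'d) \<times> 'y::chilbert) list \<Rightarrow> ((complex^'d) \<times> 'y) list \<Rightarrow> complex" where
  "kernel_gram_term n K K' = (\<Sum>a\<leftarrow>K. \<Sum>b\<leftarrow>K'. (ip (fst b) (fst a))^n * cinner (snd a) (snd b))"

definition coord_adj :: "'d \<Rightarrow> ((complex^'d::finite) \<times> 'y::chilbert) list \<Rightarrow> ((complex^'d) \<times> 'y) list" where
  "coord_adj j K = map (\<lambda>a. (fst a, scaleC (cnj (fst a $ j)) (snd a))) K"

lemma in_dball_coord_adj [simp]: "in_dball (coord_adj j K) \<longleftrightarrow> in_dball K"
  unfolding in_dball_def coord_adj_def by auto

lemma kernel_gram_term_0: "kernel_gram_term 0 K K = complex_of_real ((norm (\<Sum>a\<leftarrow>K. snd a))^2)"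
proof -
  have "kernel_gram_term 0 K K = cinner (\<Sum>a\<leftarrow>K. snd a) (\<Sum>a\<leftarrow>K. snd a)"
    unfolding kernel_gram_term_def
    by (simp add: cinner_left.sum_list_map cinner_right.sum_list_map) (rule sum_list_map_swap)
  then show ?thesis
    by (simp only: cinner_self_norm)
qed

lemma kernel_gram_term_Suc:
  fixes K :: "((complex^'d::finite) \<times> 'y::chilbert) list"
  shows "kernel_gram_term (Suc n) K K = (\<Sum>j\<in>UNIV. kernel_gram_term n (coord_adj j K) (coord_adj j K))"
proof -
  have "kernel_gram_term (Suc n) K K = (\<Sum>a\<leftarrow>K. \<Sum>b\<leftarrow>K. \<Sum>j\<in>UNIV. (ip (fst b) (fst a))^n
      * cinner (scaleC (cnj (fst a $ j)) (snd a)) (scaleC (cnj (fst b $ j)) (snd b)))"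
    unfolding kernel_gram_term_def
    by (intro arg_cong[where f = sum_list] map_cong refl)
      (simp add: cinner_scaleC_left cinner_scaleC_right ip_def sum_distrib_left sum_distrib_right algebra_simps)
  then show ?thesis
    unfolding kernel_gram_term_def coord_adj_def by (simp add: o_def sum_list_map_sum)
qed

lemma kernel_gram_term_nonneg: "0 \<le> Re (kernel_gram_term n K K)"
proof (induction n arbitrary: K)
  case 0
  then show ?case
    by (simp add: kernel_gram_term_0)
next
  case (Suc n)
  then show ?case
    by (simp add: kernel_gram_term_Suc sum_nonneg)
qed

lemma kernel_gram_term_sums:
  assumes "in_dball K" and "in_dball K'"
  shows "(\<lambda>n. kernel_gram_term n K K') sums kernel_gram K K'"
  unfolding kernel_gram_term_def kernel_gram_def
proof (intro sums_sum_list_map)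
  fix a b
  assume "a \<in> set K" and "b \<in> set K'"
  then have "fst a \<in> dball" and "fst b \<in> dball"
    using assms unfolding in_dball_def by auto
  then show "(\<lambda>n. (ip (fst b) (fst a))^n * cinner (snd a) (snd b)) sums (kd (fst b) (fst a) * cinner (snd a) (snd b))"
    by (intro sums_mult2 geometric_sums_kd)
qed

lemma kernel_gram_self_nonneg: "in_dball K \<Longrightarrow> 0 \<le> Re (kernel_gram K K)"
  using sums_le[OF _ sums_zero sums_Re[OF kernel_gram_term_sums]] kernel_gram_term_nonneg by blast

lemma Cauchy_Schwarz_quadratic:
  fixes a c :: real and \<beta> :: complex
  assumes nonneg: "\<And>t. 0 \<le> a + 2 * Re (cnj t * \<beta>) + (cmod t)^2 * c" and "0 \<le> c"
  shows "(cmod \<beta>)^2 \<le> a * c"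
proof (cases "c = 0")
  case False
  with \<open>0 \<le> c\<close> have "0 < c"
    by simp
  have "0 \<le> a + 2 * Re (cnj (- \<beta> / complex_of_real c) * \<beta>) + (cmod (- \<beta> / complex_of_real c))^2 * c"
    by (rule nonneg)
  also have "cnj (- \<beta> / complex_of_real c) * \<beta> = - complex_of_real ((cmod \<beta>)^2 / c)"
    using complex_norm_square[of \<beta>] by (simp add: mult.commute del: of_real_power)
  also have "(cmod (- \<beta> / complex_of_real c))^2 * c = (cmod \<beta>)^2 / c"
    using \<open>0 < c\<close> by (simp add: norm_divide power_divide power2_eq_square)
  finally show ?thesis
    using \<open>0 < c\<close> by (simp add: field_simps)
next
  case True
  text \<open>With c = 0 the form is affine in t, so it can only stay nonnegative if \<beta> = 0.\<close>
  have affine: "0 \<le> a - 2 * s * (cmod \<beta>)^2" for s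
    using nonneg[of "- complex_of_real s * \<beta>"] True cmod_power2[of \<beta>]
    by (simp add: power2_eq_square mult.assoc)
  show ?thesis
  proof (cases "\<beta> = 0")
    case False
    then have pos: "0 < 2 * (cmod \<beta>)^2"
      by simp
    from this affine[of "(\<bar>a\<bar> + 1) / (2 * (cmod \<beta>)^2)"]
    have "2 * (cmod \<beta>)^2 + \<bar>a\<bar> * (2 * (cmod \<beta>)^2) \<le> a * (2 * (cmod \<beta>)^2)"
      by (simp add: field_simps)
    moreover have "a * (2 * (cmod \<beta>)^2) \<le> \<bar>a\<bar> * (2 * (cmod \<beta>)^2)"
      using pos by (intro mult_right_mono) auto
    ultimately show ?thesis
      using pos by linarith
  qed (simp add: True)
qed

lemma Re_mult_cnj_self: "Re (t * cnj t * z) = (cmod t)^2 * Re z"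
  by (simp add: complex_norm_square[symmetric] del: of_real_power)

lemma Re_kernel_gram_append_scale:
  "Re (kernel_gram (K @ kernel_scale t K') (K @ kernel_scale t K'))
    = Re (kernel_gram K K) + 2 * Re (cnj t * kernel_gram K K') + (cmod t)^2 * Re (kernel_gram K' K')"
proof -
  have "kernel_gram (K @ kernel_scale t K') (K @ kernel_scale t K')
      = kernel_gram K K + cnj t * kernel_gram K K' + t * kernel_gram K' K + t * cnj t * kernel_gram K' K'"
    by (simp add: kernel_gram_append_left kernel_gram_append_right kernel_gram_scale_left
        kernel_gram_scale_right algebra_simps)
  moreover have "Re (t * kernel_gram K' K) = Re (cnj t * kernel_gram K K')"
    by (subst cnj_kernel_gram[symmetric]) simp
  ultimately show ?thesis
    by (simp only: plus_complex.sel Re_mult_cnj_self)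
qed

lemma Re_kernel_gram_scale_self:
  "Re (kernel_gram (kernel_scale t K) (kernel_scale t K)) = (cmod t)^2 * Re (kernel_gram K K)"
proof -
  have "kernel_gram (kernel_scale t K) (kernel_scale t K) = t * cnj t * kernel_gram K K"
    by (simp add: kernel_gram_scale_left kernel_gram_scale_right algebra_simps)
  then show ?thesis
    by (simp only: Re_mult_cnj_self)
qed

lemma Re_kernel_gram_scale_quotient:
  "Re (kernel_gram K1 (kernel_scale (kernel_gram K1 K2 / complex_of_real \<gamma>) K2)) = (cmod (kernel_gram K1 K2))^2 / \<gamma>"
proof -
  have "cnj (kernel_gram K1 K2) * kernel_gram K1 K2 = complex_of_real ((cmod (kernel_gram K1 K2))^2)"
    by (simp add: complex_norm_square mult.commute del: of_real_power)
  then have "cnj (kernel_gram K1 K2 / complex_of_real \<gamma>) * kernel_gram K1 K2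
      = complex_of_real ((cmod (kernel_gram K1 K2))^2) / complex_of_real \<gamma>"
    by (metis complex_cnj_complex_of_real complex_cnj_divide times_divide_eq_left)
  then show ?thesis
    unfolding kernel_gram_scale_right by (metis Re_complex_of_real of_real_divide)
qed

lemma kernel_gram_Cauchy_Schwarz:
  assumes "in_dball K" and "in_dball K'"
  shows "(cmod (kernel_gram K K'))^2 \<le> Re (kernel_gram K K) * Re (kernel_gram K' K')"
proof (rule Cauchy_Schwarz_quadratic)
  show "0 \<le> Re (kernel_gram K K) + 2 * Re (cnj t * kernel_gram K K') + (cmod t)^2 * Re (kernel_gram K' K')" for t
    using kernel_gram_self_nonneg[of "K @ kernel_scale t K'"] assms by (simp add: Re_kernel_gram_append_scale)
qed (use kernel_gram_self_nonneg assms in auto)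

lemma kernel_pair_eq_sum_nth: "kernel_pair f K = (\<Sum>i<length K. cinner (f (fst (K!i))) (snd (K!i)))"
  unfolding kernel_pair_def sum_list_map_eq_sum_nth ..

lemma kernel_gram_eq_sum_nth:
  "kernel_gram K K = (\<Sum>i<length K. \<Sum>j<length K. kd (fst (K!i)) (fst (K!j)) * cinner (snd (K!j)) (snd (K!i)))"
  unfolding kernel_gram_def sum_list_map_eq_sum_nth by (rule sum.swap)

lemma rk_bound_iff_kernel:
  "rk_bound f C \<longleftrightarrow> (\<forall>K. in_dball K \<longrightarrow> (cmod (kernel_pair f K))^2 \<le> C * Re (kernel_gram K K))"
proof
  assume bound: "rk_bound f C"
  show "\<forall>K. in_dball K \<longrightarrow> (cmod (kernel_pair f K))^2 \<le> C * Re (kernel_gram K K)"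
  proof (intro allI impI)
    fix K :: "((complex^'a) \<times> 'b) list"
    assume "in_dball K"
    then have "\<forall>i<length K. fst (K!i) \<in> dball"
      unfolding in_dball_def by auto
    then show "(cmod (kernel_pair f K))^2 \<le> C * Re (kernel_gram K K)"
      using bound[unfolded rk_bound_def, rule_format, of "length K" "\<lambda>i. fst (K!i)" "\<lambda>i. snd (K!i)"]
      unfolding kernel_pair_eq_sum_nth kernel_gram_eq_sum_nth by blast
  qed
next
  assume bound: "\<forall>K. in_dball K \<longrightarrow> (cmod (kernel_pair f K))^2 \<le> C * Re (kernel_gram K K)"
  show "rk_bound f C"
    unfolding rk_bound_def
  proof (intro allI impI)
    fix n and p :: "nat \<Rightarrow> complex^'a" and y :: "nat \<Rightarrow> 'b"
    assume "\<forall>i<n. p i \<in> dball"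
    define K where "K = map (\<lambda>i. (p i, y i)) [0..<n]"
    have "in_dball K"
      unfolding in_dball_def K_def using \<open>\<forall>i<n. p i \<in> dball\<close> by auto
    have len: "length K = n" and nth: "\<And>i. i < n \<Longrightarrow> K!i = (p i, y i)"
      unfolding K_def by simp_all
    have "kernel_pair f K = (\<Sum>i<n. cinner (f (p i)) (y i))"
      unfolding kernel_pair_eq_sum_nth len by (intro sum.cong) (simp_all add: nth)
    moreover have "kernel_gram K K = (\<Sum>i<n. \<Sum>j<n. kd (p i) (p j) * cinner (y j) (y i))"
      unfolding kernel_gram_eq_sum_nth len by (intro sum.cong refl) (simp add: nth)
    ultimately show "(cmod (\<Sum>i<n. cinner (f (p i)) (y i)))^2
        \<le> C * Re (\<Sum>i<n. \<Sum>j<n. kd (p i) (p j) * cinner (y j) (y i))"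
      using bound \<open>in_dball K\<close> by metis
  qed
qed

lemma rk_bound_mono: "rk_bound f C \<Longrightarrow> C \<le> C' \<Longrightarrow> rk_bound f C'"
  unfolding rk_bound_iff_kernel by (meson kernel_gram_self_nonneg mult_right_mono order_trans)

lemma rk_bound_cong: "(\<And>m. m \<in> dball \<Longrightarrow> f m = g m) \<Longrightarrow> rk_bound f C = rk_bound g C"
  unfolding rk_bound_iff_kernel using kernel_pair_cong by metis

lemma rk_normsq_le: "0 \<le> C \<Longrightarrow> rk_bound f C \<Longrightarrow> rk_normsq f \<le> C"
  unfolding rk_normsq_def by (rule cInf_lower) (auto intro: bdd_belowI[of _ 0])

lemma rk_normsq_nonneg:
  assumes "rk_mem f"
  shows "0 \<le> rk_normsq f"
proof -
  obtain C0 where "rk_bound f C0"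
    using assms unfolding rk_mem_def by blast
  then have "max C0 0 \<in> {C. 0 \<le> C \<and> rk_bound f C}"
    by (auto intro: rk_bound_mono)
  then have "{C. 0 \<le> C \<and> rk_bound f C} \<noteq> {}"
    by blast
  then show ?thesis
    unfolding rk_normsq_def by (rule cInf_greatest) simp
qed

lemma rk_bound_rk_normsq:
  assumes "rk_mem f"
  shows "rk_bound f (rk_normsq f)"
  unfolding rk_bound_iff_kernel
proof (intro allI impI)
  fix K :: "((complex^'a) \<times> 'b) list"
  assume K: "in_dball K"
  define T where "T = {C. 0 \<le> C \<and> rk_bound f C}"
  obtain C0 where C0: "rk_bound f C0"
    using assms unfolding rk_mem_def by blast
  then have "max C0 0 \<in> T"
    unfolding T_def by (auto intro: rk_bound_mono)
  show "(cmod (kernel_pair f K))^2 \<le> rk_normsq f * Re (kernel_gram K K)"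
  proof (cases "Re (kernel_gram K K) = 0")
    case True
    then show ?thesis
      using C0 K unfolding rk_bound_iff_kernel by fastforce
  next
    case False
    with kernel_gram_self_nonneg[OF K] have pos: "0 < Re (kernel_gram K K)"
      by simp
    have "(cmod (kernel_pair f K))^2 / Re (kernel_gram K K) \<le> Inf T"
    proof (rule cInf_greatest)
      show "T \<noteq> {}"
        using \<open>max C0 0 \<in> T\<close> by blast
      fix C
      assume "C \<in> T"
      then have "(cmod (kernel_pair f K))^2 \<le> C * Re (kernel_gram K K)"
        using K unfolding T_def rk_bound_iff_kernel by blast
      then show "(cmod (kernel_pair f K))^2 / Re (kernel_gram K K) \<le> C"
        using pos by (simp add: divide_le_eq)
    qed
    then show ?thesis
      using pos unfolding rk_normsq_def T_def by (simp add: divide_le_eq)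
  qed
qed

lemma power2_kernel_pair_le:
  "rk_mem f \<Longrightarrow> in_dball K \<Longrightarrow> (cmod (kernel_pair f K))^2 \<le> rk_normsq f * Re (kernel_gram K K)"
  using rk_bound_rk_normsq unfolding rk_bound_iff_kernel by blast

lemma rk_normsq_gt_witness:
  assumes "0 \<le> C" and "C < rk_normsq f"
  obtains K where "in_dball K" and "C * Re (kernel_gram K K) < (cmod (kernel_pair f K))^2"
proof -
  have "\<not> rk_bound f C"
    using rk_normsq_le assms by fastforce
  then show ?thesis
    using that unfolding rk_bound_iff_kernel by (auto simp: not_le)
qed

lemma rk_bound_kernel_sum: "in_dball K \<Longrightarrow> rk_bound (kernel_sum K) (Re (kernel_gram K K))"
  unfolding rk_bound_iff_kernel kernel_pair_kernel_sum using kernel_gram_Cauchy_Schwarz by blast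

lemma rk_mem_kernel_sum: "in_dball K \<Longrightarrow> rk_mem (kernel_sum K)"
  using rk_bound_kernel_sum unfolding rk_mem_def by blast

lemma rk_normsq_kernel_sum:
  assumes K: "in_dball K"
  shows "rk_normsq (kernel_sum K) = Re (kernel_gram K K)"
proof (rule antisym)
  show "rk_normsq (kernel_sum K) \<le> Re (kernel_gram K K)"
    by (rule rk_normsq_le[OF kernel_gram_self_nonneg[OF K] rk_bound_kernel_sum[OF K]])
  have "(Re (kernel_gram K K))^2 = (cmod (kernel_gram K K))^2"
    using kernel_gram_self_real[of K] kernel_gram_self_nonneg[OF K] by (metis norm_of_real power2_abs)
  also have "\<dots> \<le> rk_normsq (kernel_sum K) * Re (kernel_gram K K)"
    using power2_kernel_pair_le[OF rk_mem_kernel_sum[OF K] K] by (simp add: kernel_pair_kernel_sum)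
  finally show "Re (kernel_gram K K) \<le> rk_normsq (kernel_sum K)"
    using rk_normsq_nonneg[OF rk_mem_kernel_sum[OF K]] kernel_gram_self_nonneg[OF K]
    by (cases "Re (kernel_gram K K) = 0") (auto simp: power2_eq_square)
qed

lemma kernel_pair_expansion:
  fixes g :: "'d::finite \<Rightarrow> complex^'d \<Rightarrow> 'y::chilbert"
  shows "kernel_pair (\<lambda>m. c + (\<Sum>j\<in>UNIV. scaleC (m$j) (g j m))) K
    = cinner c (\<Sum>a\<leftarrow>K. snd a) + (\<Sum>j\<in>UNIV. kernel_pair (g j) (coord_adj j K))"
  unfolding kernel_pair_def coord_adj_def
  by (simp add: o_def cinner_left.add cinner_left.sum cinner_scaleC_left cinner_scaleC_right
      sum_list_addf sum_list_map_sum cinner_right.sum_list_map)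

lemma kernel_gram_expansion:
  fixes K :: "((complex^'d::finite) \<times> 'y::chilbert) list"
  assumes K: "in_dball K"
  shows "kernel_gram K K = complex_of_real ((norm (\<Sum>a\<leftarrow>K. snd a))^2)
    + (\<Sum>j\<in>UNIV. kernel_gram (coord_adj j K) (coord_adj j K))"
proof -
  have "kernel_gram K K
      = (\<Sum>a\<leftarrow>K. \<Sum>b\<leftarrow>K. (1 + kd (fst b) (fst a) * ip (fst b) (fst a)) * cinner (snd a) (snd b))"
    unfolding kernel_gram_def
  proof (intro arg_cong[where f = sum_list] map_cong refl)
    fix a b
    assume "a \<in> set K" and "b \<in> set K"
    then have "fst a \<in> dball" and "fst b \<in> dball"
      using K unfolding in_dball_def by auto
    then show "kd (fst b) (fst a) * cinner (snd a) (snd b)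
        = (1 + kd (fst b) (fst a) * ip (fst b) (fst a)) * cinner (snd a) (snd b)"
      using kd_eq_1_plus by metis
  qed
  moreover have "complex_of_real ((norm (\<Sum>a\<leftarrow>K. snd a))^2) = cinner (\<Sum>a\<leftarrow>K. snd a) (\<Sum>a\<leftarrow>K. snd a)"
    by (simp only: cinner_self_norm)
  moreover have "\<dots> = (\<Sum>a\<leftarrow>K. \<Sum>b\<leftarrow>K. cinner (snd a) (snd b))"
    by (simp add: cinner_left.sum_list_map cinner_right.sum_list_map) (rule sum_list_map_swap)
  moreover have "(\<Sum>j\<in>UNIV. kernel_gram (coord_adj j K) (coord_adj j K))
      = (\<Sum>a\<leftarrow>K. \<Sum>b\<leftarrow>K. kd (fst b) (fst a) * ip (fst b) (fst a) * cinner (snd a) (snd b))"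
    unfolding kernel_gram_def coord_adj_def ip_def
    by (simp add: o_def sum_list_map_sum[symmetric] cinner_scaleC_left cinner_scaleC_right
        sum_distrib_left sum_distrib_right algebra_simps)
  ultimately show ?thesis
    by (simp add: distrib_right sum_list_addf)
qed

lemma power2_mult_add_le: "(a * b + c * d)^2 \<le> (a^2 + c^2) * (b^2 + d^2)" for a b c d :: real
proof -
  have "(a^2 + c^2) * (b^2 + d^2) - (a * b + c * d)^2 = (a * d - c * b)^2"
    by (simp add: power2_eq_square algebra_simps)
  then show ?thesis
    by (metis diff_ge_0_iff_ge zero_le_power2)
qed

lemma rk_bound_expansion:
  fixes g :: "'d::finite \<Rightarrow> complex^'d \<Rightarrow> 'y::chilbert" and Cg :: "'d \<Rightarrow> real"
  assumes bound: "\<And>j. rk_bound (g j) (Cg j)" and Cg_nonneg: "\<And>j. 0 \<le> Cg j"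
  shows "rk_bound (\<lambda>m. c + (\<Sum>j\<in>UNIV. scaleC (m$j) (g j m))) ((norm c)^2 + (\<Sum>j\<in>UNIV. Cg j))"
  unfolding rk_bound_iff_kernel
proof (intro allI impI)
  fix K :: "((complex^'d) \<times> 'y) list"
  assume K: "in_dball K"
  define f where "f = (\<lambda>m. c + (\<Sum>j\<in>UNIV. scaleC (m$j) (g j m)))"
  define b where "b = (\<lambda>j. Re (kernel_gram (coord_adj j K) (coord_adj j K)))"
  define n0 where "n0 = norm (\<Sum>a\<leftarrow>K. snd a)"
  have b_nonneg: "0 \<le> b j" for j
    unfolding b_def using K by (simp add: kernel_gram_self_nonneg)
  have "cmod (kernel_pair (g j) (coord_adj j K)) \<le> sqrt (Cg j) * sqrt (b j)" for j
  proof -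
    have "(cmod (kernel_pair (g j) (coord_adj j K)))^2 \<le> Cg j * b j"
      using bound[of j] K unfolding rk_bound_iff_kernel b_def by simp
    then have "cmod (kernel_pair (g j) (coord_adj j K)) \<le> sqrt (Cg j * b j)"
      by (rule real_le_rsqrt)
    then show ?thesis
      by (simp add: real_sqrt_mult)
  qed
  then have "cmod (kernel_pair f K) \<le> norm c * n0 + (\<Sum>j\<in>UNIV. sqrt (Cg j) * sqrt (b j))"
    unfolding f_def kernel_pair_expansion n0_def
    by (intro order.trans[OF norm_triangle_ineq] add_mono norm_cinner_le order.trans[OF norm_sum] sum_mono)
  also have "\<dots> \<le> norm c * n0 + sqrt (\<Sum>j\<in>UNIV. Cg j) * sqrt (\<Sum>j\<in>UNIV. b j)"
    using Cauchy_Schwarz_sqrt_sum[of Cg b UNIV] Cg_nonneg b_nonneg by simp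
  finally have "(cmod (kernel_pair f K))^2 \<le> (norm c * n0 + sqrt (\<Sum>j\<in>UNIV. Cg j) * sqrt (\<Sum>j\<in>UNIV. b j))^2"
    by (simp add: power_mono)
  also have "\<dots> \<le> ((norm c)^2 + (sqrt (\<Sum>j\<in>UNIV. Cg j))^2) * (n0^2 + (sqrt (\<Sum>j\<in>UNIV. b j))^2)"
    by (rule power2_mult_add_le)
  also have "\<dots> = ((norm c)^2 + (\<Sum>j\<in>UNIV. Cg j)) * Re (kernel_gram K K)"
    using Cg_nonneg b_nonneg
    by (simp add: kernel_gram_expansion[OF K] b_def n0_def sum_nonneg)
  finally show "(cmod (kernel_pair f K))^2 \<le> ((norm c)^2 + (\<Sum>j\<in>UNIV. Cg j)) * Re (kernel_gram K K)" .
qed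

text \<open>L is the reflection of K' across the line spanned by k_KS; reflections are isometries.\<close>
lemma kernel_reflection:
  assumes KS: "in_dball KS" and K': "in_dball K'"
  defines "\<beta> \<equiv> kernel_gram K' KS" and "r \<equiv> Re (kernel_gram KS KS)"
  defines "s \<equiv> 2 * \<beta> / complex_of_real r"
  defines "L \<equiv> kernel_scale s KS @ kernel_scale (- 1) K'"
  shows "cnj s * complex_of_real r = 2 * cnj \<beta>" and "kernel_gram L L = kernel_gram K' K'"
proof -
  have r: "kernel_gram KS KS = complex_of_real r"
    unfolding r_def by (rule kernel_gram_self_real)
  have "r = 0 \<Longrightarrow> \<beta> = 0"
    using kernel_gram_Cauchy_Schwarz[OF K' KS] unfolding \<beta>_def r_def by simp
  then have \<beta>_s: "s * cnj \<beta> = cnj s * \<beta>" and s_r: "cnj s * complex_of_real r = 2 * cnj \<beta>"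
    unfolding s_def by (cases "r = 0"; simp)+
  then show "cnj s * complex_of_real r = 2 * cnj \<beta>"
    by simp
  have "kernel_gram L L = s * (cnj s * complex_of_real r) - s * cnj \<beta> - cnj s * \<beta> + kernel_gram K' K'"
    unfolding L_def
    by (simp add: kernel_gram_append_left kernel_gram_append_right kernel_gram_scale_left
        kernel_gram_scale_right r \<beta>_def cnj_kernel_gram[of K' KS, symmetric] algebra_simps)
  then show "kernel_gram L L = kernel_gram K' K'"
    unfolding s_r using \<beta>_s by simp
qed

text \<open>If g is orthogonal to k_KS, then the bound on k_KS + c g carries over to k_KS - c g:
  pair the latter with K' and the former with the reflection of K' across k_KS.\<close>
lemma rk_bound_reflect:
  fixes KS :: "((complex^'d::finite) \<times> 'u::chilbert) list"
  assumes KS: "in_dball KS" and orth: "kernel_pair g KS = 0"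
    and bound: "rk_bound (\<lambda>m. kernel_sum KS m + scaleC c (g m)) C"
  shows "rk_bound (\<lambda>m. kernel_sum KS m + scaleC (- c) (g m)) C"
  unfolding rk_bound_iff_kernel
proof (intro allI impI)
  fix K' :: "((complex^'d) \<times> 'u) list"
  assume K': "in_dball K'"
  define \<beta> where "\<beta> = kernel_gram K' KS"
  define r where "r = Re (kernel_gram KS KS)"
  define s where "s = 2 * \<beta> / complex_of_real r"
  define L where "L = kernel_scale s KS @ kernel_scale (- 1) K'"
  have L: "in_dball L"
    unfolding L_def using KS K' by simp
  have "kernel_pair (\<lambda>m. kernel_sum KS m + scaleC c (g m)) L
      = cnj s * complex_of_real r - (cnj \<beta> + c * kernel_pair g K')"
    unfolding L_def r_def \<beta>_def
    by (simp add: kernel_pair_append kernel_pair_kernel_scale kernel_pair_add kernel_pair_scaleC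
        kernel_pair_kernel_sum orth cnj_kernel_gram flip: kernel_gram_self_real)
  also have "\<dots> = kernel_pair (\<lambda>m. kernel_sum KS m + scaleC (- c) (g m)) K'"
    using kernel_reflection(1)[OF KS K'] unfolding s_def r_def \<beta>_def
    by (simp add: kernel_pair_add kernel_pair_scaleC kernel_pair_kernel_sum cnj_kernel_gram)
  finally show "(cmod (kernel_pair (\<lambda>m. kernel_sum KS m + scaleC (- c) (g m)) K'))^2 \<le> C * Re (kernel_gram K' K')"
    using bound L kernel_reflection(2)[OF KS K'] unfolding rk_bound_iff_kernel L_def s_def r_def \<beta>_def
    by metis
qed

lemma rk_inner_kernel_sum_eq_0:
  fixes KS :: "((complex^'d::finite) \<times> 'u::chilbert) list"
  assumes KS: "in_dball KS" and orth: "kernel_pair g KS = 0"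
  shows "rk_inner (kernel_sum KS) g = 0"
proof -
  have reflect: "rk_normsq (\<lambda>m. kernel_sum KS m + scaleC (- c) (g m)) = rk_normsq (\<lambda>m. kernel_sum KS m + scaleC c (g m))" for c
  proof -
    have "rk_bound (\<lambda>m. kernel_sum KS m + scaleC (- c) (g m)) C = rk_bound (\<lambda>m. kernel_sum KS m + scaleC c (g m)) C" for C
      using rk_bound_reflect[OF KS orth, of c C] rk_bound_reflect[OF KS orth, of "- c" C] by auto
    then show ?thesis
      unfolding rk_normsq_def by simp
  qed
  have "\<i>^2 = - (1::complex)" and "\<i>^3 = - \<i>"
    by (simp_all add: power3_eq_cube)
  then show ?thesis
    unfolding rk_inner_def sum_lessThan_4 using reflect[of 1] reflect[of \<i>] by simp
qed

context weakly_coisometric_realization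
begin

text \<open>M_S^* maps k(., z) y to k(., z) S(z)^* y.\<close>
definition MS_adj :: "((complex^'d) \<times> 'y) list \<Rightarrow> ((complex^'d) \<times> 'u) list" where
  "MS_adj K = map (\<lambda>a. (fst a, adj (S (fst a)) (snd a))) K"

definition obs_adj_sum :: "((complex^'d) \<times> 'y) list \<Rightarrow> 'x" where
  "obs_adj_sum K = (\<Sum>a\<leftarrow>K. obs_adj (fst a) (snd a))"

lemma in_dball_MS_adj [simp]: "in_dball (MS_adj K) \<longleftrightarrow> in_dball K"
  unfolding in_dball_def MS_adj_def by auto

lemma MS_adj_append: "MS_adj (K @ K') = MS_adj K @ MS_adj K'"
  unfolding MS_adj_def by simp

lemma MS_adj_kernel_scale: "in_dball K \<Longrightarrow> MS_adj (kernel_scale t K) = kernel_scale t (MS_adj K)"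
  unfolding MS_adj_def kernel_scale_def in_dball_def by (auto simp: adj_scaleC[OF blin_S])

lemma obs_adj_sum_append: "obs_adj_sum (K @ K') = obs_adj_sum K + obs_adj_sum K'"
  unfolding obs_adj_sum_def by simp

lemma obs_adj_sum_kernel_scale: "in_dball K \<Longrightarrow> obs_adj_sum (kernel_scale t K) = scaleC t (obs_adj_sum K)"
  unfolding obs_adj_sum_def kernel_scale_def in_dball_def
  by (simp add: o_def scaleC_right.sum_list_map obs_adj_scaleC cong: map_cong)

lemma cinner_obs_adj_sum:
  assumes K: "in_dball K" and K': "in_dball K'"
  shows "cinner (obs_adj_sum K) (obs_adj_sum K') = kernel_gram K K' - kernel_gram (MS_adj K) (MS_adj K')"
proof -
  have "cinner (obs_adj_sum K) (obs_adj_sum K')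
      = (\<Sum>a\<leftarrow>K. \<Sum>b\<leftarrow>K'. cinner (obs_adj (fst a) (snd a)) (obs_adj (fst b) (snd b)))"
    unfolding obs_adj_sum_def
    by (simp add: cinner_left.sum_list_map cinner_right.sum_list_map) (rule sum_list_map_swap)
  also have "\<dots> = (\<Sum>a\<leftarrow>K. \<Sum>b\<leftarrow>K'. kd (fst b) (fst a) * cinner (snd a) (snd b)
      - kd (fst b) (fst a) * cinner (adj (S (fst a)) (snd a)) (adj (S (fst b)) (snd b)))"
  proof (intro arg_cong[where f = sum_list] map_cong refl)
    fix a b
    assume "a \<in> set K" and "b \<in> set K'"
    then have "fst a \<in> dball" and "fst b \<in> dball"
      using K K' unfolding in_dball_def by auto
    then show "cinner (obs_adj (fst a) (snd a)) (obs_adj (fst b) (snd b))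
        = kd (fst b) (fst a) * cinner (snd a) (snd b)
          - kd (fst b) (fst a) * cinner (adj (S (fst a)) (snd a)) (adj (S (fst b)) (snd b))"
      by (simp add: cinner_obs_adj right_diff_distrib)
  qed
  also have "\<dots> = kernel_gram K K' - kernel_gram (MS_adj K) (MS_adj K')"
    unfolding kernel_gram_def MS_adj_def by (simp add: o_def sum_list_subtractf)
  finally show ?thesis .
qed

lemma power2_norm_obs_adj_sum:
  "in_dball K \<Longrightarrow> (norm (obs_adj_sum K))^2 = Re (kernel_gram K K) - Re (kernel_gram (MS_adj K) (MS_adj K))"
  using arg_cong[OF cinner_obs_adj_sum, of K K Re] by (simp add: Re_cinner_self)

lemma Re_kernel_gram_MS_adj_le:
  "in_dball K \<Longrightarrow> Re (kernel_gram (MS_adj K) (MS_adj K)) \<le> Re (kernel_gram K K)"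
  using power2_norm_obs_adj_sum[of K] zero_le_power2[of "norm (obs_adj_sum K)"] by linarith

lemma kernel_pair_obs: "in_dball K \<Longrightarrow> kernel_pair (obs x) K = cinner x (obs_adj_sum K)"
  unfolding kernel_pair_def obs_adj_sum_def in_dball_def
  by (simp add: cinner_right.sum_list_map cinner_obs_left cong: map_cong)

lemma rk_bound_obs: "rk_bound (obs x) ((norm x)^2)"
  unfolding rk_bound_iff_kernel
proof (intro allI impI)
  fix K :: "((complex^'d) \<times> 'y) list"
  assume K: "in_dball K"
  have "(cmod (kernel_pair (obs x) K))^2 \<le> (norm x * norm (obs_adj_sum K))^2"
    unfolding kernel_pair_obs[OF K] by (simp add: norm_cinner_le power_mono)
  also have "\<dots> \<le> (norm x)^2 * Re (kernel_gram K K)"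
    using power2_norm_obs_adj_sum[OF K] kernel_gram_self_nonneg[of "MS_adj K"] K
    by (simp add: power_mult_distrib mult_left_mono)
  finally show "(cmod (kernel_pair (obs x) K))^2 \<le> (norm x)^2 * Re (kernel_gram K K)" .
qed

lemma rk_mem_obs: "rk_mem (obs x)"
  using rk_bound_obs unfolding rk_mem_def by blast

lemma kernel_pair_MS_kernel_sum:
  assumes "in_dball K'"
  shows "kernel_pair (\<lambda>m. S m (kernel_sum K m)) K' = kernel_gram K (MS_adj K')"
proof -
  have "kernel_pair (\<lambda>m. S m (kernel_sum K m)) K' = kernel_pair (kernel_sum K) (MS_adj K')"
    unfolding kernel_pair_def MS_adj_def using assms
    by (simp add: o_def in_dball_def cinner_adj_right[OF blin_S] cong: map_cong)
  then show ?thesis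
    by (simp add: kernel_pair_kernel_sum)
qed

lemma MS_adj_projection_step:
  assumes K: "in_dball K" and K'': "in_dball K''"
  defines "\<gamma> \<equiv> Re (kernel_gram K'' K'')" and "\<beta> \<equiv> kernel_gram (MS_adj K) (MS_adj K'')"
  defines "J \<equiv> kernel_scale (\<beta> / complex_of_real \<gamma>) K''"
  assumes "0 < \<gamma>"
  shows "in_dball J"
    and "(norm (obs_adj_sum J))^2 \<le> Re (kernel_gram (MS_adj K) (MS_adj K)) - (cmod \<beta>)^2 / \<gamma>"
    and "Re (kernel_gram (MS_adj (K @ kernel_scale (- 1) J)) (MS_adj (K @ kernel_scale (- 1) J)))
      \<le> Re (kernel_gram (MS_adj K) (MS_adj K)) - (cmod \<beta>)^2 / \<gamma>"
proof -
  define a where "a = (cmod \<beta>)^2 / \<gamma>"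
  show J: "in_dball J"
    unfolding J_def using K'' by simp
  have "MS_adj J = kernel_scale (\<beta> / complex_of_real \<gamma>) (MS_adj K'')"
    unfolding J_def by (rule MS_adj_kernel_scale[OF K''])
  then have K_J: "Re (kernel_gram (MS_adj K) (MS_adj J)) = a"
    unfolding a_def \<beta>_def by (simp only: Re_kernel_gram_scale_quotient)
  have J_J: "Re (kernel_gram J J) = a"
    unfolding J_def Re_kernel_gram_scale_self a_def using \<open>0 < \<gamma>\<close>
    by (simp add: \<gamma>_def[symmetric] norm_divide power_divide power2_eq_square)
  have "MS_adj (K @ kernel_scale (- 1) J) = MS_adj K @ kernel_scale (- 1) (MS_adj J)"
    using J by (simp add: MS_adj_append MS_adj_kernel_scale)
  then have "Re (kernel_gram (MS_adj (K @ kernel_scale (- 1) J)) (MS_adj (K @ kernel_scale (- 1) J)))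
      = Re (kernel_gram (MS_adj K) (MS_adj K)) - 2 * a + Re (kernel_gram (MS_adj J) (MS_adj J))"
    using K_J by (simp add: Re_kernel_gram_append_scale)
  moreover have "0 \<le> Re (kernel_gram (MS_adj (K @ kernel_scale (- 1) J)) (MS_adj (K @ kernel_scale (- 1) J)))"
    using K J by (simp add: kernel_gram_self_nonneg)
  moreover have "Re (kernel_gram (MS_adj J) (MS_adj J)) \<le> a"
    using Re_kernel_gram_MS_adj_le[OF J] J_J by simp
  moreover have "(norm (obs_adj_sum J))^2 = a - Re (kernel_gram (MS_adj J) (MS_adj J))"
    using power2_norm_obs_adj_sum[OF J] J_J by simp
  ultimately show "(norm (obs_adj_sum J))^2 \<le> Re (kernel_gram (MS_adj K) (MS_adj K)) - (cmod \<beta>)^2 / \<gamma>"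
    and "Re (kernel_gram (MS_adj (K @ kernel_scale (- 1) J)) (MS_adj (K @ kernel_scale (- 1) J)))
      \<le> Re (kernel_gram (MS_adj K) (MS_adj K)) - (cmod \<beta>)^2 / \<gamma>"
    unfolding a_def by linarith+
qed

lemma obs_pairing_perturbed:
  assumes K: "in_dball K" and J: "in_dball J"
    and J_small: "norm (obs_adj_sum J) \<le> \<delta> * norm (obs_adj_sum K)"
  defines "x \<equiv> obs_adj_sum K" and "K' \<equiv> K @ kernel_scale (- 1) J"
  shows "(norm x)^2 * (1 - \<delta>) \<le> cmod (kernel_pair (obs x) K')"
    and "Re (kernel_gram K' K') \<le> (1 + \<delta>)^2 * (norm x)^2 + Re (kernel_gram (MS_adj K') (MS_adj K'))"
proof -
  have K': "in_dball K'"
    unfolding K'_def using K J by simp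
  have obs_adj_K': "obs_adj_sum K' = x - obs_adj_sum J"
    unfolding K'_def x_def using J by (simp add: obs_adj_sum_append obs_adj_sum_kernel_scale scaleC_minus1_left)
  have "cmod (cinner x (obs_adj_sum J)) \<le> (norm x)^2 * \<delta>"
    using norm_cinner_le[of x "obs_adj_sum J"] mult_left_mono[OF J_small norm_ge_zero[of x]]
    unfolding x_def by (simp add: power2_eq_square mult_ac)
  moreover have "kernel_pair (obs x) K' = complex_of_real ((norm x)^2) - cinner x (obs_adj_sum J)"
    unfolding kernel_pair_obs[OF K'] obs_adj_K' by (simp add: cinner_right.diff cinner_self_norm)
  then have "cmod (complex_of_real ((norm x)^2)) - cmod (cinner x (obs_adj_sum J)) \<le> cmod (kernel_pair (obs x) K')"
    by (simp only: norm_triangle_ineq2)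
  moreover have "cmod (complex_of_real ((norm x)^2)) = (norm x)^2"
    by (metis abs_of_nonneg norm_of_real zero_le_power2)
  ultimately show "(norm x)^2 * (1 - \<delta>) \<le> cmod (kernel_pair (obs x) K')"
    unfolding right_diff_distrib mult_1_right by linarith
  have "norm (obs_adj_sum K') \<le> (1 + \<delta>) * norm x"
    unfolding obs_adj_K' using J_small norm_triangle_ineq4[of x "obs_adj_sum J"] unfolding x_def
    by (simp add: algebra_simps)
  then have "(norm (obs_adj_sum K'))^2 \<le> (1 + \<delta>)^2 * (norm x)^2"
    by (metis norm_ge_zero power_mono power_mult_distrib)
  then show "Re (kernel_gram K' K') \<le> (1 + \<delta>)^2 * (norm x)^2 + Re (kernel_gram (MS_adj K') (MS_adj K'))"
    using power2_norm_obs_adj_sum[OF K'] by simp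
qed

end

section \<open>Realizations of inner functions\<close>

locale inner_wc_realization = weakly_coisometric_realization S A B C D
  for S :: "complex^'d \<Rightarrow> 'u::chilbert \<Rightarrow> 'y::chilbert"
    and A :: "'d::finite \<Rightarrow> 'x::chilbert \<Rightarrow> 'x"
    and B :: "'d \<Rightarrow> 'u \<Rightarrow> 'x"
    and C :: "'x \<Rightarrow> 'y"
    and D :: "'u \<Rightarrow> 'y" +
  assumes inner: "inner_schur S"
begin

text \<open>Since M_S is a partial isometry and M_S^* k_K is orthogonal to the kernel of M_S,
  M_S M_S^* k_K has the same norm as M_S^* k_K.\<close>
lemma rk_normsq_MS_MS_adj:
  assumes K: "in_dball K"
  shows "rk_normsq (\<lambda>m. S m (kernel_sum (MS_adj K) m)) = Re (kernel_gram (MS_adj K) (MS_adj K))"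
proof -
  have "rk_inner (kernel_sum (MS_adj K)) g = 0" if "\<forall>m\<in>dball. S m (g m) = 0" for g
  proof (rule rk_inner_kernel_sum_eq_0)
    have "kernel_pair g (MS_adj K) = (\<Sum>a\<leftarrow>K. cinner (S (fst a) (g (fst a))) (snd a))"
      unfolding kernel_pair_def MS_adj_def using K
      by (simp add: o_def in_dball_def cinner_adj_right[OF blin_S] cong: map_cong)
    then show "kernel_pair g (MS_adj K) = 0"
      using K that by (simp add: in_dball_def cinner_left.zero cong: map_cong)
  qed (use K in simp)
  then have "rk_normsq (\<lambda>m. S m (kernel_sum (MS_adj K) m)) = rk_normsq (kernel_sum (MS_adj K))"
    using inner rk_mem_kernel_sum[of "MS_adj K"] K unfolding inner_schur_def by simp
  then show ?thesis
    using rk_normsq_kernel_sum[of "MS_adj K"] K by simp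
qed

text \<open>J approximates the component of k_K in the range of M_S, which O^* annihilates.\<close>
lemma range_component_approx:
  assumes K: "in_dball K" and "0 < \<epsilon>"
  obtains J where "in_dball J" and "(norm (obs_adj_sum J))^2 \<le> \<epsilon>"
    and "Re (kernel_gram (MS_adj (K @ kernel_scale (- 1) J)) (MS_adj (K @ kernel_scale (- 1) J))) \<le> \<epsilon>"
proof (cases "Re (kernel_gram (MS_adj K) (MS_adj K)) \<le> \<epsilon>")
  case True
  then show ?thesis
    using that[of "[]"] \<open>0 < \<epsilon>\<close> by (simp add: kernel_scale_def obs_adj_sum_def)
next
  case False
  define q where "q = Re (kernel_gram (MS_adj K) (MS_adj K))"
  have "0 \<le> q - \<epsilon>" and "q - \<epsilon> < rk_normsq (\<lambda>m. S m (kernel_sum (MS_adj K) m))"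
    using False \<open>0 < \<epsilon>\<close> rk_normsq_MS_MS_adj[OF K] by (simp_all add: q_def)
  then obtain K'' where K'': "in_dball K''"
    and big: "(q - \<epsilon>) * Re (kernel_gram K'' K'') < (cmod (kernel_gram (MS_adj K) (MS_adj K'')))^2"
    by (rule rk_normsq_gt_witness) (simp add: kernel_pair_MS_kernel_sum)
  define \<beta> where "\<beta> = kernel_gram (MS_adj K) (MS_adj K'')"
  define \<gamma> where "\<gamma> = Re (kernel_gram K'' K'')"
  have "(cmod \<beta>)^2 \<le> q * Re (kernel_gram (MS_adj K'') (MS_adj K''))"
    unfolding \<beta>_def q_def using K K'' by (intro kernel_gram_Cauchy_Schwarz) simp_all
  also have "\<dots> \<le> q * \<gamma>"
    unfolding \<gamma>_def q_def using K K'' Re_kernel_gram_MS_adj_le kernel_gram_self_nonneg[of "MS_adj K"]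
    by (intro mult_left_mono) simp_all
  finally have "(cmod \<beta>)^2 \<le> q * \<gamma>" .
  with big kernel_gram_self_nonneg[OF K''] have "0 < \<gamma>"
    unfolding \<beta>_def \<gamma>_def by (cases "\<gamma> = 0") (auto simp: \<gamma>_def)
  with big have "q - \<epsilon> < (cmod \<beta>)^2 / \<gamma>"
    unfolding \<beta>_def[symmetric] \<gamma>_def[symmetric] by (simp add: less_divide_eq)
  then have "q - (cmod \<beta>)^2 / \<gamma> < \<epsilon>"
    by linarith
  with MS_adj_projection_step[OF K K'' \<open>0 < \<gamma>\<close>[unfolded \<gamma>_def]] show ?thesis
    unfolding \<beta>_def[symmetric] \<gamma>_def[symmetric] q_def[symmetric] by (meson less_imp_le order_trans that)
qed

text \<open>O is isometric on the vectors x = O^* k_K: pairing O x with k_K' for K' = K - J,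
  where O^* k_J is small and M_S^* k_K' is small, gives almost (norm x)^2, while k_K' has norm
  almost norm x.\<close>
lemma power2_norm_le_rk_normsq_obs:
  assumes K: "in_dball K"
  shows "(norm (obs_adj_sum K))^2 \<le> rk_normsq (obs (obs_adj_sum K))"
proof (rule le_if_perturbed_le)
  fix \<delta> :: real
  assume "0 < \<delta>" and "\<delta> < 1"
  define x where "x = obs_adj_sum K"
  define b where "b = (norm x)^2"
  define N where "N = rk_normsq (obs x)"
  have "0 \<le> N"
    unfolding N_def by (rule rk_normsq_nonneg[OF rk_mem_obs])
  have "b * (1 - \<delta>)^2 \<le> N * ((1 + \<delta>)^2 + \<delta>^2)"
  proof (cases "b = 0")
    case True
    with \<open>0 \<le> N\<close> show ?thesis
      by simp
  next
    case False
    then have "0 < b"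
      unfolding b_def by simp
    obtain J where J: "in_dball J" and J_small: "(norm (obs_adj_sum J))^2 \<le> (\<delta> * norm x)^2"
      and rest_small: "Re (kernel_gram (MS_adj (K @ kernel_scale (- 1) J)) (MS_adj (K @ kernel_scale (- 1) J))) \<le> \<delta>^2 * b"
      using range_component_approx[OF K, of "\<delta>^2 * b"] \<open>0 < \<delta>\<close> \<open>0 < b\<close>
      unfolding b_def by (auto simp: power_mult_distrib)
    define K' where "K' = K @ kernel_scale (- 1) J"
    have K': "in_dball K'"
      unfolding K'_def using K J by simp
    have "norm (obs_adj_sum J) \<le> \<delta> * norm x"
      using J_small by (rule power2_le_imp_le) (use \<open>0 < \<delta>\<close> in simp)
    note perturbed = obs_pairing_perturbed[OF K J this[unfolded x_def], folded x_def K'_def]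
    have "(b * (1 - \<delta>))^2 \<le> (cmod (kernel_pair (obs x) K'))^2"
      using perturbed(1) \<open>\<delta> < 1\<close> \<open>0 < b\<close> unfolding b_def by (intro power_mono) auto
    also have "\<dots> \<le> N * Re (kernel_gram K' K')"
      unfolding N_def by (rule power2_kernel_pair_le[OF rk_mem_obs K'])
    also have "\<dots> \<le> N * (b * ((1 + \<delta>)^2 + \<delta>^2))"
      using perturbed(2) rest_small \<open>0 \<le> N\<close> unfolding K'_def b_def
      by (intro mult_left_mono) (simp_all add: algebra_simps)
    finally have "b * (b * (1 - \<delta>)^2) \<le> b * (N * ((1 + \<delta>)^2 + \<delta>^2))"
      by (simp add: power_mult_distrib power2_eq_square mult_ac)
    with \<open>0 < b\<close> show ?thesis
      by (simp add: mult.commute)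
  qed
  then show "(norm (obs_adj_sum K))^2 * (1 - \<delta>)^2 \<le> rk_normsq (obs (obs_adj_sum K)) * ((1 + \<delta>)^2 + \<delta>^2)"
    unfolding b_def N_def x_def .
qed

lemma power2_norm_le_symmetrized:
  assumes K: "in_dball K"
  defines "x \<equiv> obs_adj_sum K"
  shows "(norm x)^2 \<le> (norm (C x))^2 + (\<Sum>j\<in>UNIV. (norm (C (A j x)))^2)
    + (\<Sum>j\<in>UNIV. \<Sum>k\<in>UNIV. (norm (scaleC (1/2) (A k (A j x) + A j (A k x))))^2)"
proof -
  define w where "w = (\<lambda>j k. scaleC (1/2) (A k (A j x) + A j (A k x)))"
  define g where "g = (\<lambda>j m. C (A j x) + (\<Sum>k\<in>UNIV. scaleC (m$k) (obs (w j k) m)))"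
  have "rk_bound (g j) ((norm (C (A j x)))^2 + (\<Sum>k\<in>UNIV. (norm (w j k))^2))" for j
    unfolding g_def by (rule rk_bound_expansion[OF rk_bound_obs]) simp
  then have "rk_bound (\<lambda>m. C x + (\<Sum>j\<in>UNIV. scaleC (m$j) (g j m)))
      ((norm (C x))^2 + (\<Sum>j\<in>UNIV. (norm (C (A j x)))^2 + (\<Sum>k\<in>UNIV. (norm (w j k))^2)))"
    by (rule rk_bound_expansion) (simp add: sum_nonneg)
  moreover have "rk_bound (obs x) c \<longleftrightarrow> rk_bound (\<lambda>m. C x + (\<Sum>j\<in>UNIV. scaleC (m$j) (g j m))) c" for c
    unfolding g_def w_def by (rule rk_bound_cong) (rule obs_symmetrized_expansion)
  ultimately have "rk_bound (obs x) ((norm (C x))^2 + (\<Sum>j\<in>UNIV. (norm (C (A j x)))^2 + (\<Sum>k\<in>UNIV. (norm (w j k))^2)))"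
    by blast
  then have "rk_normsq (obs x) \<le> (norm (C x))^2 + (\<Sum>j\<in>UNIV. (norm (C (A j x)))^2 + (\<Sum>k\<in>UNIV. (norm (w j k))^2))"
    by (intro rk_normsq_le) (auto intro!: add_nonneg_nonneg sum_nonneg)
  with power2_norm_le_rk_normsq_obs[OF K] show ?thesis
    unfolding x_def[symmetric] w_def by (simp add: sum.distrib add.assoc)
qed

text \<open>Contractivity of the colligation at x and at the A_j x bounds (norm x)^2 from below by
  the right-hand side of the previous lemma plus the squared norms of the antisymmetric parts
  (A_k A_j x - A_j A_k x) / 2, which therefore vanish.\<close>
lemma A_commute_on_obs_adj_sum:
  assumes K: "in_dball K"
  shows "A i (A j (obs_adj_sum K)) = A j (A i (obs_adj_sum K))"
proof -
  define x where "x = obs_adj_sum K"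
  define d where "d = (\<lambda>j k. scaleC (1/2) (A k (A j x) - A j (A k x)))"
  have "(\<Sum>j\<in>UNIV. \<Sum>k\<in>UNIV. (norm (A k (A j x)))^2) + (\<Sum>j\<in>UNIV. (norm (C (A j x)))^2)
      \<le> (\<Sum>j\<in>UNIV. (norm (A j x))^2)"
    using sum_mono[of UNIV "\<lambda>j. (\<Sum>k\<in>UNIV. (norm (A k (A j x)))^2) + (norm (C (A j x)))^2"
        "\<lambda>j. (norm (A j x))^2", OF contractive_A_C]
    by (simp add: sum.distrib)
  moreover have "(\<Sum>j\<in>UNIV. (norm (A j x))^2) + (norm (C x))^2 \<le> (norm x)^2"
    by (rule contractive_A_C)
  moreover have "(\<Sum>j\<in>UNIV. \<Sum>k\<in>UNIV. (norm (scaleC (1/2) (A k (A j x) + A j (A k x))))^2)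
      + (\<Sum>j\<in>UNIV. \<Sum>k\<in>UNIV. (norm (d j k))^2) = (\<Sum>j\<in>UNIV. \<Sum>k\<in>UNIV. (norm (A k (A j x)))^2)"
    unfolding d_def by (rule sum_power2_norm_symmetrize)
  ultimately have "(\<Sum>j\<in>UNIV. \<Sum>k\<in>UNIV. (norm (d j k))^2) \<le> 0"
    using power2_norm_le_symmetrized[OF K] unfolding x_def by linarith
  then have "(\<Sum>j\<in>UNIV. \<Sum>k\<in>UNIV. (norm (d j k))^2) = 0"
    by (simp add: order_antisym sum_nonneg)
  then have "d j i = 0"
    by (simp add: sum_nonneg_eq_0_iff sum_nonneg)
  then have "scaleC 2 (d j i) = 0"
    by (simp add: scaleC_right.zero)
  then show ?thesis
    unfolding d_def x_def by (simp add: scaleC_scaleC scaleC_one)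
qed

text \<open>The vectors O^* k_K are dense by observability, and the commutator of A_i and A_j,
  which vanishes on them, is moved to the other side by taking adjoints.\<close>
lemma commutative_if_observable:
  assumes "observable A C"
  shows "commutative A"
proof -
  have "A i (A j x) - A j (A i x) = 0" for i j x
  proof (rule eq_0_if_orthogonal_obs_adj[OF assms])
    fix l :: "complex^'d" and y
    assume l: "l \<in> dball"
    define e where "e = obs_adj l y"
    define v where "v = adj (A j) (adj (A i) e) - adj (A i) (adj (A j) e)"
    have "v = 0"
    proof (rule eq_0_if_orthogonal_obs_adj[OF assms])
      fix l' :: "complex^'d" and y'
      assume l': "l' \<in> dball"
      have single: "obs_adj_sum [(l', y')] = obs_adj l' y'"
        by (simp add: obs_adj_sum_def)
      have "cinner (obs_adj l' y') v = 0"
        using A_commute_on_obs_adj_sum[of "[(l', y')]" i j] l' unfolding single v_def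
        by (simp add: in_dball_def cinner_right.diff cinner_adj_right[OF blin_A, symmetric])
      then show "cinner v (obs_adj l' y') = 0"
        by (metis cinner_commute complex_cnj_zero)
    qed
    then show "cinner (A i (A j x) - A j (A i x)) (obs_adj l y) = 0"
      unfolding e_def[symmetric] v_def
      by (simp add: cinner_left.diff cinner_right.diff cinner_adj_right[OF blin_A])
  qed
  then show ?thesis
    unfolding commutative_def by (simp add: fun_eq_iff)
qed

end

theorem theorem4p5:
  fixes S :: "complex^'d \<Rightarrow> 'u::chilbert \<Rightarrow> 'y::chilbert"
    and A :: "'d::finite \<Rightarrow> 'x::chilbert \<Rightarrow> 'x"
    and B :: "'d \<Rightarrow> 'u \<Rightarrow> 'x"
    and C :: "'x \<Rightarrow> 'y"
    and D :: "'u \<Rightarrow> 'y"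
  assumes "inner_schur S"
    and "realization S A B C D"
    and "observable A C"
    and "weakly_coisometric A B C D"
  shows "commutative A"
proof -
  interpret inner_wc_realization S A B C D
    using assms by unfold_locales (auto simp: inner_schur_def schur_class_def weakly_coisometric_def)
  show ?thesis
    using assms(3) by (rule commutative_if_observable)
qed

end
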